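(* (1) Let $\lambda\in(\mathbb Z^n_{\ge0})_+$, $\ell\in[n]$ with $\ell\ge\ell(\lambda)$, and $E\in B(\varpi_\ell)$ with $E\otimes T^0_\lambda$ semistandard. If $j\notin E$ and $j+1\in E$, then $\Psi_{E\otimes T^0_\lambda}=tT_j^{-1}\Psi_{s_jE\otimes T^0_\lambda}$. (2) If $E\in B(\varpi_\ell)$ and $s_jE\le E$, then $\Psi_E=tT_j^{-1}\Psi_{s_jE}$.
   Context: Fix $n\ge1$, $[n]=\{1,\dots,n\}$. $S_n$ with simple transpositions $s_i$ and length $\ell(\cdot)$ acts on $\mathbb Z^n$ by permuting coordinates; $\varpi_k=\varepsilon_1+\dots+\varepsilon_k$. $(\mathbb Z^n_{\ge0})_+=\{\lambda\in\mathbb Z^n_{\ge0}:\lambda_1\ge\dots\ge\lambda_n\}$, $\ell(\lambda)$ = number of nonzero parts; $S_{n,\lambda}$ the stabilizer. The affine Hecke algebra $H$ is the $\mathbb Z[t^{\pm1}]$-algebra with generators $T_1,\dots,T_{n-1},X_1^{\pm1},\dots,X_n^{\pm1}$ and relations $T_i^2=(t-1)T_i+t$, $T_iT_{i+1}T_i=T_{i+1}T_iT_{i+1}$, $T_iT_j=T_jT_i$ ($|i-j|>1$), $X_iX_j=X_jX_i$, $T_iX_iT_i=tX_{i+1}$, $T_iX_j=X_jT_i$ ($j\notin\{i,i+1\}$). $T_w$ via reduced words; $H_n=\mathrm{span}\{T_w\}$, $H_{n,\lambda}=\mathrm{span}\{T_w:w\in S_{n,\lambda}\}$, $\mathbf 1_\lambda=\sum_{w\in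 S_{n,\lambda}}T_w$. Columns: $B(\varpi_\ell)$ is the set of $C=(c_1<\dots<c_\ell)\subseteq[n]$; order $E\le F$ iff $e_i\le f_i$ for all $i$; $s_jC$ is the column whose underlying set is the image of $C$ under $(j,j+1)$; $u_C\in S_n$ sends $k\mapsto c_k$ ($k\le\ell$) and $\ell+1,\dots,n$ increasingly onto $[n]\setminus C$. Tensors $C_r\otimes\cdots\otimes C_1$ of columns of weakly decreasing lengths (left to right) are fillings of Young diagrams, semistandard if rows weakly increase. $T^0_\lambda$ is the tableau of shape $\lambda$ with row $i$ filled by $i$. $\Psi$: each $h\in H_n$ is uniquely $\sum_{F\in B(\varpi_\ell)}T_{u_F}h_F$, $h_F\in H_{n,\varpi_\ell}$. $\Psi_C=t^{\ell(u_C)}(T_{u_C^{-1}})^{-1}\mathbf 1_{\varpi_\ell}$ for $C\in B(\varpi_\ell)$; for $T=C\otimes S$ ($C\in B(\varpi_\ell)$, $S$ with columns of length $\le\ell$), write $\Psi_S=\sum_ET_{u_E}h_{E,S}$ ($h_{E,S}\in H_{n,\varpi_\ell}$) and set $\Psi_T=t^{\ell(u_C)}(T_{u_C^{-1}})^{-1}h_{C,S}$. *)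

theory Defs
  imports "HOL-Combinatorics.Combinatorics" "HOL-Library.Function_Algebras"
begin

text \<open>An element of H_n = span{T_w} is represented by its coefficient function
  (w |-> coefficient of T_w), vanishing outside S_n.  Coefficients lie in an
  arbitrary commutative ring containing the parameter t (a unit).\<close>

type_synonym 'a hecke = "(nat \<Rightarrow> nat) \<Rightarrow> 'a"

definition perms :: "nat \<Rightarrow> (nat \<Rightarrow> nat) set" where
  "perms n = {w. w permutes {1..n}}"

definition Hn :: "nat \<Rightarrow> ('a::zero) hecke set" where
  "Hn n = {h. \<forall>w. w \<notin> perms n \<longrightarrow> h w = 0}"

definition s :: "nat \<Rightarrow> nat \<Rightarrow> nat" where
  "s i = transpose i (Suc i)"

definition len :: "nat \<Rightarrow> (nat \<Rightarrow> nat) \<Rightarrow> nat" where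
  "len n w = card {(a, b). a \<in> {1..n} \<and> b \<in> {1..n} \<and> a < b \<and> w b < w a}"

definition Tb :: "nat \<Rightarrow> (nat \<Rightarrow> nat) \<Rightarrow> ('a::{zero,one}) hecke" where
  "Tb n w = (\<lambda>v. if v = w \<and> w \<in> perms n then 1 else 0)"

definition hsmult :: "'a::times \<Rightarrow> 'a hecke \<Rightarrow> 'a hecke" where
  "hsmult c h = (\<lambda>w. c * h w)"

text \<open>Left multiplication by T_i (1 <= i < n), from
  T_i T_v = T_{s_i v} if len(s_i v) > len v, and = (t-1) T_v + t T_{s_i v} otherwise.\<close>
definition Ti_mult :: "nat \<Rightarrow> 'a::comm_ring_1 \<Rightarrow> nat \<Rightarrow> 'a hecke \<Rightarrow> 'a hecke" where
  "Ti_mult n t i h = (\<lambda>w. if w \<in> perms n then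
      (if len n (s i \<circ> w) < len n w then h (s i \<circ> w) + (t - 1) * h w
       else t * h (s i \<circ> w))
     else 0)"

text \<open>Left multiplication by T_w, via T_w = T_i T_{s_i w} for a left descent i
  (we take the least one); the first argument is fuel (= len w).\<close>
fun Tact :: "nat \<Rightarrow> 'a::comm_ring_1 \<Rightarrow> nat \<Rightarrow> (nat \<Rightarrow> nat) \<Rightarrow> 'a hecke \<Rightarrow> 'a hecke" where
  "Tact n t 0 w g = g"
| "Tact n t (Suc k) w g =
     (if w = id then g else
        (let i = (LEAST i. 1 \<le> i \<and> i < n \<and> len n (s i \<circ> w) < len n w)
         in Ti_mult n t i (Tact n t k (s i \<circ> w) g)))"

definition Tw_mult :: "nat \<Rightarrow> 'a::comm_ring_1 \<Rightarrow> (nat \<Rightarrow> nat) \<Rightarrow> 'a hecke \<Rightarrow> 'a hecke" where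
  "Tw_mult n t w g = Tact n t (len n w) w g"

definition hmult :: "nat \<Rightarrow> 'a::comm_ring_1 \<Rightarrow> 'a hecke \<Rightarrow> 'a hecke \<Rightarrow> 'a hecke" where
  "hmult n t h g = (\<Sum>w\<in>perms n. hsmult (h w) (Tw_mult n t w g))"

definition hinv :: "nat \<Rightarrow> 'a::comm_ring_1 \<Rightarrow> 'a hecke \<Rightarrow> 'a hecke" where
  "hinv n t x = (THE y. y \<in> Hn n \<and> hmult n t x y = Tb n id \<and> hmult n t y x = Tb n id)"

definition stab :: "nat \<Rightarrow> nat \<Rightarrow> (nat \<Rightarrow> nat) set" where
  "stab n l = {w \<in> perms n. w ` {1..l} = {1..l}}"

definition Hsub :: "nat \<Rightarrow> nat \<Rightarrow> ('a::zero) hecke set" where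
  "Hsub n l = {h. \<forall>w. w \<notin> stab n l \<longrightarrow> h w = 0}"

definition one_lam :: "nat \<Rightarrow> nat \<Rightarrow> ('a::{zero,one}) hecke" where
  "one_lam n l = (\<lambda>w. if w \<in> stab n l then 1 else 0)"

definition cols :: "nat \<Rightarrow> nat \<Rightarrow> nat set set" where
  "cols n l = {C. C \<subseteq> {1..n} \<and> card C = l}"

definition u :: "nat \<Rightarrow> nat set \<Rightarrow> nat \<Rightarrow> nat" where
  "u n C k = (if 1 \<le> k \<and> k \<le> card C then sorted_list_of_set C ! (k - 1)
              else if card C < k \<and> k \<le> n then sorted_list_of_set ({1..n} - C) ! (k - card C - 1)
              else k)"

definition col_le :: "nat set \<Rightarrow> nat set \<Rightarrow> bool" where
  "col_le E F \<longleftrightarrow> card E = card F \<and>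
     (\<forall>i < card E. sorted_list_of_set E ! i \<le> sorted_list_of_set F ! i)"

definition scol :: "nat \<Rightarrow> nat set \<Rightarrow> nat set" where
  "scol j C = s j ` C"

text \<open>[C_r, ..., C_1] represents C_r (x) ... (x) C_1; semistandard: column lengths
  weakly decrease to the right and rows weakly increase.\<close>
definition semistandard :: "nat set list \<Rightarrow> bool" where
  "semistandard Ts \<longleftrightarrow> (\<forall>k. Suc k < length Ts \<longrightarrow>
     card (Ts ! Suc k) \<le> card (Ts ! k) \<and>
     (\<forall>r < card (Ts ! Suc k). sorted_list_of_set (Ts ! k) ! r \<le> sorted_list_of_set (Ts ! Suc k) ! r))"

definition is_partition :: "nat \<Rightarrow> nat list \<Rightarrow> bool" where
  "is_partition n lam \<longleftrightarrow> length lam = n \<and> sorted (rev lam)"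

definition nparts :: "nat list \<Rightarrow> nat" where
  "nparts lam = length (filter (\<lambda>x. x \<noteq> 0) lam)"

text \<open>T^0_lambda: row i filled with i; column k = {i in [n]. k <= lambda_i}\<close>
definition T0 :: "nat \<Rightarrow> nat list \<Rightarrow> nat set list" where
  "T0 n lam = map (\<lambda>k. {i \<in> {1..n}. k \<le> lam ! (i - 1)}) [1..<Suc (if lam = [] then 0 else hd lam)]"

definition decomp :: "nat \<Rightarrow> 'a::comm_ring_1 \<Rightarrow> nat \<Rightarrow> 'a hecke \<Rightarrow> nat set \<Rightarrow> 'a hecke" where
  "decomp n t l h = (THE hF. (\<forall>F. hF F \<in> Hsub n l) \<and> (\<forall>F. F \<notin> cols n l \<longrightarrow> hF F = 0) \<and>
        h = (\<Sum>F\<in>cols n l. hmult n t (Tb n (u n F)) (hF F)))"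

definition Psi_col :: "nat \<Rightarrow> 'a::comm_ring_1 \<Rightarrow> nat set \<Rightarrow> 'a hecke" where
  "Psi_col n t C = hsmult (t ^ len n (u n C))
      (hmult n t (hinv n t (Tb n (inv (u n C)))) (one_lam n (card C)))"

fun Psi :: "nat \<Rightarrow> 'a::comm_ring_1 \<Rightarrow> nat set list \<Rightarrow> 'a hecke" where
  "Psi n t [] = one_lam n 0"
| "Psi n t [C] = Psi_col n t C"
| "Psi n t (C # D # S) = hsmult (t ^ len n (u n C))
      (hmult n t (hinv n t (Tb n (inv (u n C)))) (decomp n t (card C) (Psi n t (D # S)) C))"

end

theory Submission
  imports Defs
begin

text \<open>
  Write \<open>\<Psi>\<close> through the operators \<open>\<Phi>\<^sub>C g = t^\<ell>(u\<^sub>C) (T_(u\<^sub>C\<^sup>-\<^sup>1))\<^sup>-\<^sup>1 g\<close>.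
  If \<open>j \<notin> C\<close> and \<open>j + 1 \<in> C\<close>, then \<open>u\<^sub>C = s\<^sub>j u_(s\<^sub>jC)\<close> with one more inversion,
  so \<open>T_(u\<^sub>C\<^sup>-\<^sup>1) = T_(u_(s\<^sub>jC)\<^sup>-\<^sup>1) T\<^sub>j\<close> and \<open>\<Phi>\<^sub>C = t T\<^sub>j\<^sup>-\<^sup>1 \<Phi>_(s\<^sub>jC)\<close>.
  This is (2) in that case, and it gives (1) because \<open>\<Psi>\<close> of \<open>T\<^sup>0\<^sub>\<lambda>\<close> has the same
  components at \<open>E\<close> and at \<open>s\<^sub>jE\<close>: it is invariant under \<open>w \<mapsto> s\<^sub>jw\<close> for every \<open>j\<close>
  beyond the first column of \<open>T\<^sup>0\<^sub>\<lambda>\<close>, and semistandardness of \<open>E \<otimes> T\<^sup>0\<^sub>\<lambda>\<close>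
  puts \<open>j\<close> there. If \<open>s\<^sub>jC = C\<close>, then \<open>u\<^sub>C\<^sup>-\<^sup>1 s\<^sub>j u\<^sub>C = s\<^sub>k\<close> with \<open>k \<noteq> \<ell>\<close>,
  and \<open>T\<^sub>k\<close> acts on \<open>\<one>_\<varpi>\<^sub>\<ell>\<close> by \<open>t\<close>, so \<open>\<Psi>\<^sub>C\<close> is a \<open>t\<close>-eigenvector of \<open>T\<^sub>j\<close>.
  The remaining case \<open>j \<in> C\<close>, \<open>j + 1 \<notin> C\<close> contradicts \<open>s\<^sub>jC \<le> C\<close>.

  Associativity and the invertibility of the \<open>T\<^sub>w\<close> follow because left
  multiplications commute with right multiplication by every \<open>T\<^sub>k\<close>, and a linear map with
  this property is determined by its value at \<open>T\<^sub>1\<close>.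
\<close>

section \<open>Inversions and length\<close>

definition inversions :: "nat \<Rightarrow> (nat \<Rightarrow> nat) \<Rightarrow> (nat \<times> nat) set" where
  "inversions n w = {(a, b). a \<in> {1..n} \<and> b \<in> {1..n} \<and> a < b \<and> w b < w a}"

lemma len_eq_card_inversions: "len n w = card (inversions n w)"
  by (simp add: len_def inversions_def)

lemma finite_inversions: "finite (inversions n w)"
proof -
  have "inversions n w \<subseteq> {1..n} \<times> {1..n}" by (auto simp: inversions_def)
  then show ?thesis by (rule finite_subset) auto
qed

lemma s_apply: "s i x = (if x = i then Suc i else if x = Suc i then i else x)"
  by (simp add: s_def transpose_def)

lemma s_s [simp]: "s i (s i x) = x"
  by (simp add: s_apply)

lemma s_comp_s: "s i \<circ> s i = id"
  by (auto simp: fun_eq_iff)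

lemma inv_s: "inv (s i) = s i"
  using s_comp_s by (metis inv_unique_comp)

lemma s_eq_s_iff: "s i x = s i y \<longleftrightarrow> x = y"
  by (metis s_s)

lemma s_permutes: "1 \<le> i \<Longrightarrow> i < n \<Longrightarrow> s i permutes {1..n}"
  unfolding s_def by (rule permutes_swap_id) auto

lemma s_less_s_iff:
  "\<not> (x = i \<and> y = Suc i) \<Longrightarrow> \<not> (x = Suc i \<and> y = i) \<Longrightarrow> s i y < s i x \<longleftrightarrow> y < x"
  by (auto simp: s_apply)

lemma permutes_apply_eq_iff: "w permutes S \<Longrightarrow> w a = w b \<longleftrightarrow> a = b"
  by (meson permutes_inj injD)

lemma permutes_apply_in: "w permutes {1..n} \<Longrightarrow> x \<in> {1..n} \<Longrightarrow> w x \<in> {1..n}"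
  by (metis permutes_in_image)

lemma permutes_inv_in: "w permutes {1..n} \<Longrightarrow> x \<in> {1..n} \<Longrightarrow> inv w x \<in> {1..n}"
  by (metis permutes_in_image permutes_inv)

lemma inversions_s_comp:
  assumes w: "w permutes {1..n}" and i: "1 \<le> i" "i < n"
    and asc: "inv w i < inv w (Suc i)"
  shows "inversions n (s i \<circ> w) = insert (inv w i, inv w (Suc i)) (inversions n w)"
    and "(inv w i, inv w (Suc i)) \<notin> inversions n w"
proof -
  define p q where "p = inv w i" and "q = inv w (Suc i)"
  have wp: "w p = i" and wq: "w q = Suc i"
    using w unfolding p_def q_def by (simp_all add: permutes_inverses(1))
  have pq: "p \<in> {1..n}" "q \<in> {1..n}" "p < q"
    unfolding p_def q_def using permutes_inv_in[OF w, of i] permutes_inv_in[OF w, of "Suc i"] i asc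
      by auto
  show "(inv w i, inv w (Suc i)) \<notin> inversions n w"
    using wp wq by (auto simp: inversions_def p_def[symmetric] q_def[symmetric])
  show "inversions n (s i \<circ> w) = insert (inv w i, inv w (Suc i)) (inversions n w)"
  proof (rule set_eqI, clarify)
    fix a b
    show "(a, b) \<in> inversions n (s i \<circ> w) \<longleftrightarrow> (a, b) \<in> insert (inv w i, inv w (Suc i)) (inversions n w)"
    proof (cases "(a, b) = (p, q)")
      case True
      then show ?thesis
        using wp wq pq by (auto simp: inversions_def p_def[symmetric] q_def[symmetric] s_apply)
    next
      case False
      have "\<not> (w a = i \<and> w b = Suc i)"
      proof
        assume "w a = i \<and> w b = Suc i"
        then have "a = p" "b = q" using wp wq permutes_apply_eq_iff[OF w] by metis+
        with False show False by simp
      qed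
      moreover have "\<not> (w a = Suc i \<and> w b = i)" if "a < b"
      proof
        assume "w a = Suc i \<and> w b = i"
        then have "a = q" "b = p" using wp wq permutes_apply_eq_iff[OF w] by metis+
        with \<open>a < b\<close> pq show False by simp
      qed
      ultimately show ?thesis
        using False s_less_s_iff[of "w a" i "w b"]
        by (auto simp: inversions_def p_def[symmetric] q_def[symmetric])
    qed
  qed
qed

lemma len_s_comp_ascent:
  assumes "w permutes {1..n}" "1 \<le> i" "i < n" "inv w i < inv w (Suc i)"
  shows "len n (s i \<circ> w) = Suc (len n w)"
  using inversions_s_comp[OF assms] by (simp add: len_eq_card_inversions finite_inversions)

lemma inv_s_comp_apply:
  assumes w: "w permutes {1..n}" and i: "1 \<le> i" "i < n"
  shows "inv (s i \<circ> w) i = inv w (Suc i)" "inv (s i \<circ> w) (Suc i) = inv w i"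
proof -
  have sw: "s i \<circ> w permutes {1..n}" by (rule permutes_compose[OF w s_permutes[OF i]])
  show "inv (s i \<circ> w) i = inv w (Suc i)" "inv (s i \<circ> w) (Suc i) = inv w i"
    using sw w by (simp_all add: permutes_inv_eq permutes_inverses(1) s_apply)
qed

lemma len_s_comp_descent:
  assumes w: "w permutes {1..n}" and i: "1 \<le> i" "i < n"
    and desc: "inv w (Suc i) < inv w i"
  shows "len n w = Suc (len n (s i \<circ> w))"
proof -
  have sw: "s i \<circ> w permutes {1..n}" by (rule permutes_compose[OF w s_permutes[OF i]])
  have "len n (s i \<circ> (s i \<circ> w)) = Suc (len n (s i \<circ> w))"
    by (rule len_s_comp_ascent[OF sw i]) (simp add: inv_s_comp_apply[OF w i] desc)
  then show ?thesis by (simp add: comp_assoc[symmetric] s_comp_s)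
qed

lemma inversions_comp_s:
  assumes k: "1 \<le> k" "k < n" and asc: "w k < w (Suc k)"
  shows "inversions n (w \<circ> s k) = insert (k, Suc k) ((\<lambda>(a, b). (s k a, s k b)) ` inversions n w)"
    and "(k, Suc k) \<notin> (\<lambda>(a, b). (s k a, s k b)) ` inversions n w"
proof -
  let ?f = "\<lambda>(a::nat, b::nat). (s k a, s k b)"
  have mem: "(c, d) \<in> ?f ` inversions n w \<longleftrightarrow> (s k c, s k d) \<in> inversions n w" for c d
  proof
    assume "(c, d) \<in> ?f ` inversions n w"
    then show "(s k c, s k d) \<in> inversions n w" by auto
  next
    assume "(s k c, s k d) \<in> inversions n w"
    then have "?f (s k c, s k d) \<in> ?f ` inversions n w" by (rule imageI)
    then show "(c, d) \<in> ?f ` inversions n w" by simp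
  qed
  show "(k, Suc k) \<notin> ?f ` inversions n w"
    unfolding mem by (simp add: inversions_def s_apply)
  show "inversions n (w \<circ> s k) = insert (k, Suc k) (?f ` inversions n w)"
  proof (rule set_eqI, clarify)
    fix c d
    show "(c, d) \<in> inversions n (w \<circ> s k) \<longleftrightarrow> (c, d) \<in> insert (k, Suc k) (?f ` inversions n w)"
    proof (cases "(c, d) = (k, Suc k) \<or> (c, d) = (Suc k, k)")
      case True
      then show ?thesis using k asc by (auto simp: inversions_def s_apply split: if_splits)
    next
      case False
      have "s k c < s k d \<longleftrightarrow> c < d"
        using False s_less_s_iff[of d k c] by (auto simp: s_apply)
      moreover have "c \<in> {1..n} \<longleftrightarrow> s k c \<in> {1..n}" "d \<in> {1..n} \<longleftrightarrow> s k d \<in> {1..n}"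
        using k by (auto simp: s_apply)
      ultimately show ?thesis using False mem[of c d] by (auto simp: inversions_def)
    qed
  qed
qed

lemma len_comp_s_ascent:
  assumes k: "1 \<le> k" "k < n" and asc: "w k < w (Suc k)"
  shows "len n (w \<circ> s k) = Suc (len n w)"
proof -
  have "inj_on (\<lambda>(a, b). (s k a, s k b)) (inversions n w)"
    by (auto simp: inj_on_def s_eq_s_iff)
  then show ?thesis
    using inversions_comp_s[OF assms]
      by (simp add: len_eq_card_inversions finite_inversions card_image)
qed

lemma len_comp_s_descent:
  assumes k: "1 \<le> k" "k < n" and desc: "w (Suc k) < w k"
  shows "len n w = Suc (len n (w \<circ> s k))"
proof -
  have "len n ((w \<circ> s k) \<circ> s k) = Suc (len n (w \<circ> s k))"
    by (rule len_comp_s_ascent[OF k]) (simp add: s_apply desc)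
  then show ?thesis by (simp add: comp_assoc s_comp_s)
qed

lemma len_s_comp_less_iff:
  assumes w: "w permutes {1..n}" and i: "1 \<le> i" "i < n"
  shows "len n (s i \<circ> w) < len n w \<longleftrightarrow> inv w (Suc i) < inv w i"
proof -
  have "inv w (Suc i) \<noteq> inv w i" using w by (metis Suc_n_not_n permutes_inverses(1))
  then show ?thesis
    using len_s_comp_ascent[OF w i] len_s_comp_descent[OF w i]
      by (cases "inv w i < inv w (Suc i)") auto
qed

lemma len_comp_s_less_iff:
  assumes w: "w permutes {1..n}" and k: "1 \<le> k" "k < n"
  shows "len n (w \<circ> s k) < len n w \<longleftrightarrow> w (Suc k) < w k"
proof -
  have "w (Suc k) \<noteq> w k" using permutes_apply_eq_iff[OF w] by simp
  then show ?thesis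
    using len_comp_s_ascent[OF k] len_comp_s_descent[OF k] by (cases "w k < w (Suc k)") auto
qed

lemma exists_inversion:
  fixes w :: "nat \<Rightarrow> nat"
  assumes w: "w permutes {1..n}" and nid: "w \<noteq> id"
  shows "\<exists>a b. a \<in> {1..n} \<and> b \<in> {1..n} \<and> a < b \<and> w b < w a"
proof -
  obtain x0 where x0: "w x0 \<noteq> x0" using nid by (auto simp: fun_eq_iff)
  then have x0n: "x0 \<in> {1..n}" using w by (meson permutes_not_in)
  define x where "x = (LEAST x. x \<in> {1..n} \<and> w x \<noteq> x)"
  have x: "x \<in> {1..n}" "w x \<noteq> x"
    using LeastI[of "\<lambda>x. x \<in> {1..n} \<and> w x \<noteq> x" x0] x0 x0n unfolding x_def by auto
  have below: "w y = y" if "1 \<le> y" "y < x" for y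
    using not_less_Least[of y "\<lambda>x. x \<in> {1..n} \<and> w x \<noteq> x"] that x unfolding x_def[symmetric] by auto
  have wx: "w x \<in> {1..n}" using x(1) w by (metis permutes_in_image)
  have "x < w x"
  proof (rule ccontr)
    assume "\<not> x < w x"
    then have "w (w x) = w x" using x wx below by (simp add: nat_neq_iff)
    then show False using x permutes_apply_eq_iff[OF w] by blast
  qed
  \<comment> \<open>the preimage of \<open>x\<close> lies beyond \<open>x\<close>, since everything below \<open>x\<close> is fixed\<close>
  define b where "b = inv w x"
  have wb: "w b = x" unfolding b_def using w by (simp add: permutes_inverses(1))
  have b: "b \<in> {1..n}" unfolding b_def using permutes_inv_in[OF w] x by blast
  have "b \<noteq> x" using wb x(2) by auto
  moreover have "\<not> b < x" using below[of b] wb b by auto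
  ultimately have "x < b" by simp
  then show ?thesis using x b wb \<open>x < w x\<close> by blast
qed

lemma exists_adjacent_descent:
  fixes w :: "nat \<Rightarrow> nat"
  shows "a < b \<Longrightarrow> w b < w a \<Longrightarrow> \<exists>k. a \<le> k \<and> k < b \<and> w (Suc k) < w k"
proof (induction "b - a" arbitrary: a)
  case 0
  then show ?case by simp
next
  case (Suc m)
  show ?case
  proof (cases "w (Suc a) < w a")
    case True
    then show ?thesis using Suc.prems by auto
  next
    case False
    then have "w b < w (Suc a)" using Suc.prems by simp
    then have "Suc a < b" using Suc.prems by (metis Suc_lessI less_irrefl)
    moreover have "m = b - Suc a" using Suc.hyps(2) by arith
    ultimately obtain k where "Suc a \<le> k \<and> k < b \<and> w (Suc k) < w k"
      using Suc.hyps(1)[of "Suc a"] \<open>w b < w (Suc a)\<close> by auto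
    then show ?thesis by (intro exI[of _ k]) auto
  qed
qed

lemma exists_right_descent:
  assumes "w permutes {1..n}" "w \<noteq> id"
  shows "\<exists>k. 1 \<le> k \<and> k < n \<and> w (Suc k) < w k"
proof -
  obtain a b where ab: "a \<in> {1..n}" "b \<in> {1..n}" "a < b" "w b < w a"
    using exists_inversion[OF assms] by blast
  then obtain k where "a \<le> k \<and> k < b \<and> w (Suc k) < w k"
    using exists_adjacent_descent by blast
  then show ?thesis using ab by (intro exI[of _ k]) auto
qed

lemma exists_left_descent:
  assumes w: "w permutes {1..n}" and nid: "w \<noteq> id"
  shows "\<exists>i. 1 \<le> i \<and> i < n \<and> inv w (Suc i) < inv w i"
proof -
  have "inv w \<noteq> id" using w nid by (metis inv_id inv_inv_eq permutes_bij)
  then show ?thesis using exists_right_descent[OF permutes_inv[OF w]] by blast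
qed

lemma len_id: "len n id = 0"
proof -
  have "inversions n id = {}" by (auto simp: inversions_def)
  then show ?thesis by (simp add: len_eq_card_inversions)
qed

lemma len_eq_0_imp_id:
  assumes w: "w permutes {1..n}" and l: "len n w = 0"
  shows "w = id"
proof (rule ccontr)
  assume "w \<noteq> id"
  then obtain a b where "(a, b) \<in> inversions n w"
    using exists_inversion[OF w] by (auto simp: inversions_def)
  then show False using l finite_inversions by (auto simp: len_eq_card_inversions)
qed

lemma len_s: "1 \<le> i \<Longrightarrow> i < n \<Longrightarrow> len n (s i) = 1"
  using len_comp_s_ascent[of i n id] by (simp add: len_id)

section \<open>Left and right multiplication by a simple generator\<close>

definition Tr_mult :: "nat \<Rightarrow> 'a::comm_ring_1 \<Rightarrow> nat \<Rightarrow> 'a hecke \<Rightarrow> 'a hecke" where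
  "Tr_mult n t k h = (\<lambda>w. if w \<in> perms n then
      (if len n (w \<circ> s k) < len n w then h (w \<circ> s k) + (t - 1) * h w
       else t * h (w \<circ> s k))
     else 0)"

lemma Ti_mult_apply:
  assumes w: "w permutes {1..n}" and i: "1 \<le> i" "i < n"
  shows "Ti_mult n t i h w =
    (if inv w (Suc i) < inv w i then h (s i \<circ> w) + (t - 1) * h w else t * h (s i \<circ> w))"
  using w len_s_comp_less_iff[OF w i] by (simp add: Ti_mult_def perms_def)

lemma Tr_mult_apply:
  assumes w: "w permutes {1..n}" and k: "1 \<le> k" "k < n"
  shows "Tr_mult n t k h w =
    (if w (Suc k) < w k then h (w \<circ> s k) + (t - 1) * h w else t * h (w \<circ> s k))"
  using w len_comp_s_less_iff[OF w k] by (simp add: Tr_mult_def perms_def)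

lemma s_comp_eq_comp_s_iff:
  assumes w: "w permutes {1..n}"
  shows "s i \<circ> w = w \<circ> s k \<longleftrightarrow> w k = i \<and> w (Suc k) = Suc i \<or> w k = Suc i \<and> w (Suc k) = i"
proof
  assume eq: "s i \<circ> w = w \<circ> s k"
  have "s i (w k) = w (Suc k)" using fun_cong[OF eq, of k] by (simp add: s_apply)
  moreover have "w (Suc k) \<noteq> w k" using permutes_apply_eq_iff[OF w] by simp
  ultimately show "w k = i \<and> w (Suc k) = Suc i \<or> w k = Suc i \<and> w (Suc k) = i"
    by (auto simp: s_apply split: if_splits)
next
  assume sw: "w k = i \<and> w (Suc k) = Suc i \<or> w k = Suc i \<and> w (Suc k) = i"
  show "s i \<circ> w = w \<circ> s k"
  proof
    fix z
    show "(s i \<circ> w) z = (w \<circ> s k) z"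
    proof (cases "z = k \<or> z = Suc k")
      case True
      then show ?thesis using sw by (auto simp: s_apply)
    next
      case False
      then have "w z \<noteq> i" "w z \<noteq> Suc i" using sw permutes_apply_eq_iff[OF w] by metis+
      then show ?thesis using False by (simp add: s_apply)
    qed
  qed
qed

lemma inv_comp_s:
  assumes w: "w permutes {1..n}" and k: "1 \<le> k" "k < n"
  shows "inv (w \<circ> s k) = s k \<circ> inv w"
  using w s_permutes[OF k] by (simp add: permutes_bij o_inv_distrib inv_s)

lemma descents_when_s_comp_neq_comp_s:
  assumes w: "w permutes {1..n}" and k: "1 \<le> k" "k < n" and neq: "s i \<circ> w \<noteq> w \<circ> s k"
  shows "inv (w \<circ> s k) (Suc i) < inv (w \<circ> s k) i \<longleftrightarrow> inv w (Suc i) < inv w i"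
    and "(s i \<circ> w) (Suc k) < (s i \<circ> w) k \<longleftrightarrow> w (Suc k) < w k"
proof -
  have nsw: "\<not> (w k = i \<and> w (Suc k) = Suc i \<or> w k = Suc i \<and> w (Suc k) = i)"
    using s_comp_eq_comp_s_iff[OF w] neq by blast
  then have "\<not> (inv w i = k \<and> inv w (Suc i) = Suc k)" "\<not> (inv w i = Suc k \<and> inv w (Suc i) = k)"
    using w by (metis permutes_inverses(1))+
  then show "inv (w \<circ> s k) (Suc i) < inv (w \<circ> s k) i \<longleftrightarrow> inv w (Suc i) < inv w i"
    unfolding inv_comp_s[OF w k] using s_less_s_iff[of "inv w i" k "inv w (Suc i)"] by simp
  show "(s i \<circ> w) (Suc k) < (s i \<circ> w) k \<longleftrightarrow> w (Suc k) < w k"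
    using s_less_s_iff[of "w k" i "w (Suc k)"] nsw by auto
qed

lemma descents_when_s_comp_eq_comp_s:
  assumes w: "w permutes {1..n}" and k: "1 \<le> k" "k < n" and eq: "s i \<circ> w = w \<circ> s k"
  shows "inv (w \<circ> s k) (Suc i) < inv (w \<circ> s k) i \<longleftrightarrow> \<not> inv w (Suc i) < inv w i"
    and "(s i \<circ> w) (Suc k) < (s i \<circ> w) k \<longleftrightarrow> \<not> w (Suc k) < w k"
    and "inv w (Suc i) < inv w i \<longleftrightarrow> w (Suc k) < w k"
proof -
  have sw: "w k = i \<and> w (Suc k) = Suc i \<or> w k = Suc i \<and> w (Suc k) = i"
    using s_comp_eq_comp_s_iff[OF w] eq by blast
  have iw: "w k = i \<Longrightarrow> inv w i = k \<and> inv w (Suc i) = Suc k"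
    "w k = Suc i \<Longrightarrow> inv w i = Suc k \<and> inv w (Suc i) = k"
    using sw w by (metis permutes_inv_eq)+
  show "inv (w \<circ> s k) (Suc i) < inv (w \<circ> s k) i \<longleftrightarrow> \<not> inv w (Suc i) < inv w i"
    unfolding inv_comp_s[OF w k] using sw iw by (auto simp: s_apply)
  show "(s i \<circ> w) (Suc k) < (s i \<circ> w) k \<longleftrightarrow> \<not> w (Suc k) < w k"
    unfolding eq using sw by (auto simp: s_apply)
  show "inv w (Suc i) < inv w i \<longleftrightarrow> w (Suc k) < w k"
    using sw iw by auto
qed

text \<open>If \<open>s\<^sub>i w = w s\<^sub>k\<close> the commutation is the quadratic relation; otherwise the descents
  of \<open>w\<close> at \<open>i\<close> (on the left) and at \<open>k\<close> (on the right) do not interact.\<close>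

lemma Ti_mult_Tr_mult_commute:
  fixes t :: "'a::comm_ring_1"
  assumes i: "1 \<le> i" "i < n" and k: "1 \<le> k" "k < n"
  shows "Ti_mult n t i (Tr_mult n t k h) = Tr_mult n t k (Ti_mult n t i h)"
proof
  fix w
  show "Ti_mult n t i (Tr_mult n t k h) w = Tr_mult n t k (Ti_mult n t i h) w"
  proof (cases "w \<in> perms n")
    case False
    then show ?thesis by (simp add: Ti_mult_def Tr_mult_def)
  next
    case True
    then have w: "w permutes {1..n}" by (simp add: perms_def)
    define a b c where "a = s i \<circ> w" and "b = w \<circ> s k" and "c = s i \<circ> w \<circ> s k"
    have a: "a permutes {1..n}" and b: "b permutes {1..n}"
      unfolding a_def b_def using w s_permutes[OF i] s_permutes[OF k]
        by (simp_all add: permutes_compose)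
    have c: "a \<circ> s k = c" "s i \<circ> b = c" unfolding a_def b_def c_def by (simp_all add: o_assoc)
    have LHS: "Ti_mult n t i (Tr_mult n t k h) w =
       (if inv w (Suc i) < inv w i then
          ((if a (Suc k) < a k then h c + (t - 1) * h a else t * h c) +
           (t - 1) * (if w (Suc k) < w k then h b + (t - 1) * h w else t * h b))
        else t * (if a (Suc k) < a k then h c + (t - 1) * h a else t * h c))"
      by (simp add: Ti_mult_apply[OF w i] Tr_mult_apply[OF a k] Tr_mult_apply[OF w k] c
          flip: a_def b_def)
    have RHS: "Tr_mult n t k (Ti_mult n t i h) w =
       (if w (Suc k) < w k then
          ((if inv b (Suc i) < inv b i then h c + (t - 1) * h b else t * h c) +
           (t - 1) * (if inv w (Suc i) < inv w i then h a + (t - 1) * h w else t * h a))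
        else t * (if inv b (Suc i) < inv b i then h c + (t - 1) * h b else t * h c))"
      by (simp add: Tr_mult_apply[OF w k] Ti_mult_apply[OF b i] Ti_mult_apply[OF w i] c
          flip: a_def b_def)
    show ?thesis
    proof (cases "a = b")
      case False
      then show ?thesis
        using descents_when_s_comp_neq_comp_s[OF w k, of i] unfolding LHS RHS a_def b_def
        by (simp add: algebra_simps)
    next
      case True
      then have "c = w" unfolding a_def b_def c_def by (simp add: comp_assoc s_comp_s)
      then show ?thesis
        using True descents_when_s_comp_eq_comp_s[OF w k, of i] unfolding LHS RHS a_def b_def
        by (simp add: algebra_simps)
    qed
  qed
qed


section \<open>Linear maps commuting with the right action\<close>

lemma sum_fun_apply: "(\<Sum>i\<in>A. f i) x = (\<Sum>i\<in>A. f i x)"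
  by (induction A rule: infinite_finite_induct) auto

lemma finite_perms: "finite (perms n)"
  unfolding perms_def by (rule finite_permutations) simp

definition hlinear :: "('a::comm_ring_1 hecke \<Rightarrow> 'a hecke) \<Rightarrow> bool" where
  "hlinear F \<longleftrightarrow> (\<forall>x y. F (x + y) = F x + F y) \<and> (\<forall>c x. F (hsmult c x) = hsmult c (F x))"

definition Tr_equivariant :: "nat \<Rightarrow> 'a::comm_ring_1 \<Rightarrow> ('a hecke \<Rightarrow> 'a hecke) \<Rightarrow> bool" where
  "Tr_equivariant n t F \<longleftrightarrow> (\<forall>k h. 1 \<le> k \<and> k < n \<longrightarrow> F (Tr_mult n t k h) = Tr_mult n t k (F h))"

lemma hsmult_0 [simp]: "hsmult (0::'a::comm_ring_1) x = 0"
  by (simp add: hsmult_def fun_eq_iff)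

lemma hsmult_1 [simp]: "hsmult (1::'a::comm_ring_1) x = x"
  by (simp add: hsmult_def fun_eq_iff)

lemma hsmult_apply: "hsmult c a w = c * a w"
  by (simp add: hsmult_def)

lemma hsmult_add_right: "hsmult (c::'a::comm_ring_1) (x + y) = hsmult c x + hsmult c y"
  by (simp add: hsmult_def fun_eq_iff algebra_simps)

lemma hsmult_add_left: "hsmult ((c::'a::comm_ring_1) + d) x = hsmult c x + hsmult d x"
  by (simp add: hsmult_def fun_eq_iff algebra_simps)

lemma hsmult_hsmult: "hsmult (c::'a::comm_ring_1) (hsmult d x) = hsmult (c * d) x"
  by (simp add: hsmult_def fun_eq_iff algebra_simps)

lemma hsmult_sum: "hsmult (c::'a::comm_ring_1) (\<Sum>i\<in>A. f i) = (\<Sum>i\<in>A. hsmult c (f i))"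
  by (simp add: hsmult_def fun_eq_iff sum_fun_apply sum_distrib_left)

lemma hlinear_zero: "hlinear F \<Longrightarrow> F 0 = 0"
  unfolding hlinear_def by (metis hsmult_0)

lemma hlinear_add: "hlinear F \<Longrightarrow> F (x + y) = F x + F y"
  unfolding hlinear_def by blast

lemma hlinear_hsmult: "hlinear F \<Longrightarrow> F (hsmult c x) = hsmult c (F x)"
  unfolding hlinear_def by blast

lemma hlinear_sum: "hlinear F \<Longrightarrow> F (\<Sum>i\<in>A. f i) = (\<Sum>i\<in>A. F (f i))"
  by (induction A rule: infinite_finite_induct) (auto simp: hlinear_zero hlinear_add)

lemma hlinear_comp: "hlinear F \<Longrightarrow> hlinear G \<Longrightarrow> hlinear (F \<circ> G)"
  unfolding hlinear_def by auto

lemma Tr_equivariant_comp: "Tr_equivariant n t F \<Longrightarrow> Tr_equivariant n t G \<Longrightarrow> Tr_equivariant n t (F \<circ> G)"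
  unfolding Tr_equivariant_def by auto

lemma hlinear_Ti_mult: "hlinear (Ti_mult n t i)"
  unfolding hlinear_def Ti_mult_def hsmult_def by (auto simp: fun_eq_iff algebra_simps)

lemma hlinear_Tr_mult: "hlinear (Tr_mult n t k)"
  unfolding hlinear_def Tr_mult_def hsmult_def by (auto simp: fun_eq_iff algebra_simps)

lemma Tr_equivariant_Ti_mult: "1 \<le> i \<Longrightarrow> i < n \<Longrightarrow> Tr_equivariant n t (Ti_mult n t i)"
  unfolding Tr_equivariant_def using Ti_mult_Tr_mult_commute by blast

definition left_descent :: "nat \<Rightarrow> (nat \<Rightarrow> nat) \<Rightarrow> nat" where
  "left_descent n w = (LEAST i. 1 \<le> i \<and> i < n \<and> len n (s i \<circ> w) < len n w)"

lemma left_descent: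
  assumes w: "w permutes {1..n}" and nid: "w \<noteq> id"
  shows "1 \<le> left_descent n w" "left_descent n w < n" "len n (s (left_descent n w) \<circ> w) < len n w"
    "len n w = Suc (len n (s (left_descent n w) \<circ> w))"
proof -
  obtain i where i: "1 \<le> i" "i < n" "inv w (Suc i) < inv w i" using exists_left_descent[OF w nid]
    by blast
  have dl: "len n (s i \<circ> w) < len n w" using len_s_comp_less_iff[OF w] i by blast
  have P: "1 \<le> left_descent n w \<and> left_descent n w < n \<and> len n (s (left_descent n w) \<circ> w) < len n w"
    unfolding left_descent_def by (rule LeastI[where k=i]) (use i dl in auto)
  then show "1 \<le> left_descent n w" "left_descent n w < n" "len n (s (left_descent n w) \<circ> w) < len n w" by auto
  have "inv w (Suc (left_descent n w)) < inv w (left_descent n w)" using P len_s_comp_less_iff[OF w]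
    by blast
  then show "len n w = Suc (len n (s (left_descent n w) \<circ> w))" using len_s_comp_descent[OF w] P
    by blast
qed

lemma Tw_mult_id: "Tw_mult n t id g = g"
  by (simp add: Tw_mult_def len_id)

lemma Tw_mult_step:
  assumes w: "w permutes {1..n}" and nid: "w \<noteq> id"
  shows "Tw_mult n t w g = Ti_mult n t (left_descent n w) (Tw_mult n t (s (left_descent n w) \<circ> w) g)"
proof -
  let ?i = "left_descent n w"
  have "Tw_mult n t w g = Tact n t (Suc (len n (s ?i \<circ> w))) w g"
    using left_descent(4)[OF w nid] by (simp only: Tw_mult_def)
  also have "\<dots> = Ti_mult n t ?i (Tact n t (len n (s ?i \<circ> w)) (s ?i \<circ> w) g)"
    unfolding Tact.simps(2) Let_def left_descent_def[symmetric] using nid by simp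
  finally show ?thesis by (simp only: Tw_mult_def)
qed

lemma Tw_mult_hlinear_equivariant:
  assumes w: "w permutes {1..n}"
  shows "hlinear (Tw_mult n t w) \<and> Tr_equivariant n t (Tw_mult n t w)"
  using w
proof (induction "len n w" arbitrary: w rule: less_induct)
  case less
  note IH0 = less(1) and wp = less(2)
  show ?case
  proof (cases "w = id")
    case True
    then show ?thesis by (simp add: Tw_mult_id hlinear_def Tr_equivariant_def)
  next
    case False
    let ?i = "left_descent n w"
    have sw: "s ?i \<circ> w permutes {1..n}"
      using permutes_compose[OF wp s_permutes] left_descent[OF wp False] by blast
    have IH: "hlinear (Tw_mult n t (s ?i \<circ> w)) \<and> Tr_equivariant n t (Tw_mult n t (s ?i \<circ> w))"
      using IH0[OF _ sw] left_descent[OF wp False] by blast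
    have eq: "Tw_mult n t w = Ti_mult n t ?i \<circ> Tw_mult n t (s ?i \<circ> w)"
      by (intro ext) (simp only: o_apply Tw_mult_step[OF wp False])
    show ?thesis unfolding eq
      using IH hlinear_comp[OF hlinear_Ti_mult] Tr_equivariant_comp[OF Tr_equivariant_Ti_mult]
        left_descent[OF wp False] by blast
  qed
qed

lemma Tb_in_Hn: "Tb n w \<in> Hn n"
  by (simp add: Tb_def Hn_def)

lemma Ti_mult_in_Hn: "Ti_mult n t i h \<in> Hn n"
  by (simp add: Ti_mult_def Hn_def)

lemma Tw_mult_in_Hn: "w permutes {1..n} \<Longrightarrow> g \<in> Hn n \<Longrightarrow> Tw_mult n t w g \<in> Hn n"
  by (cases "w = id") (simp_all add: Tw_mult_id Tw_mult_step Ti_mult_in_Hn)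

lemma Ti_mult_Tb_ascent:
  assumes x: "x permutes {1..n}" and i: "1 \<le> i" "i < n" and up: "inv x i < inv x (Suc i)"
  shows "Ti_mult n t i (Tb n x) = Tb n (s i \<circ> x)"
proof
  fix w
  have sx: "s i \<circ> x permutes {1..n}" by (rule permutes_compose[OF x s_permutes[OF i]])
  have l1: "len n (s i \<circ> x) = Suc (len n x)" by (rule len_s_comp_ascent[OF x i up])
  have ne: "s i \<circ> x \<noteq> x" using l1 by auto
  have ss: "s i \<circ> (s i \<circ> x) = x" by (simp add: fun_eq_iff)
  show "Ti_mult n t i (Tb n x) w = Tb n (s i \<circ> x) w"
  proof (cases "w = s i \<circ> x")
    case True
    then show ?thesis using x sx l1 ss ne by (simp add: Ti_mult_def Tb_def perms_def)
  next
    case False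
    have "s i \<circ> w = x \<Longrightarrow> w = s i \<circ> x" by (metis comp_assoc s_comp_s id_comp)
    then show ?thesis using False x sx l1 ss
      by (auto simp: Ti_mult_def Tb_def perms_def)
  qed
qed

lemma hecke_basis_expansion: "(h::'a::comm_ring_1 hecke) \<in> Hn n \<Longrightarrow> h = (\<Sum>w\<in>perms n. hsmult (h w) (Tb n w))"
proof
  fix v assume h: "h \<in> Hn n"
  have "(\<Sum>w\<in>perms n. hsmult (h w) (Tb n w)) v = (\<Sum>w\<in>perms n. if w = v then h v else 0)"
    unfolding sum_fun_apply by (rule sum.cong) (auto simp: hsmult_def Tb_def)
  also have "\<dots> = h v" using h finite_perms by (auto simp: Hn_def)
  finally show "h v = (\<Sum>w\<in>perms n. hsmult (h w) (Tb n w)) v" by simp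
qed

lemma Tw_mult_Tb_id: "w permutes {1..n} \<Longrightarrow> Tw_mult n t w (Tb n id) = Tb n w"
proof (induction "len n w" arbitrary: w rule: less_induct)
  case less
  note IH0 = less(1) and wp = less(2)
  show ?case
  proof (cases "w = id")
    case True
    then show ?thesis by (simp add: Tw_mult_id)
  next
    case False
    let ?i = "left_descent n w"
    note P = left_descent[OF wp False]
    have sw: "s ?i \<circ> w permutes {1..n}"
      using permutes_compose[OF wp s_permutes] P by blast
    have IH: "Tw_mult n t (s ?i \<circ> w) (Tb n id) = Tb n (s ?i \<circ> w)"
      using IH0[OF _ sw] P by simp
    have "inv (s ?i \<circ> w) ?i < inv (s ?i \<circ> w) (Suc ?i)"
      using inv_s_comp_apply[OF wp P(1,2)] len_s_comp_less_iff[OF wp P(1,2)] P(3) by simp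
    then have "Ti_mult n t ?i (Tb n (s ?i \<circ> w)) = Tb n (s ?i \<circ> (s ?i \<circ> w))"
      by (rule Ti_mult_Tb_ascent[OF sw P(1,2)])
    moreover have "s ?i \<circ> (s ?i \<circ> w) = w" by (simp add: fun_eq_iff)
    ultimately show ?thesis using Tw_mult_step[OF wp False, of t] IH by simp
  qed
qed

lemma Tr_mult_Tb_ascent:
  assumes x: "x permutes {1..n}" and k: "1 \<le> k" "k < n" and up: "x k < x (Suc k)"
  shows "Tr_mult n t k (Tb n x) = Tb n (x \<circ> s k)"
proof
  fix w
  have sx: "x \<circ> s k permutes {1..n}" by (rule permutes_compose[OF s_permutes[OF k] x])
  have l1: "len n (x \<circ> s k) = Suc (len n x)" by (rule len_comp_s_ascent[OF k up])
  have ne: "x \<circ> s k \<noteq> x" using l1 by auto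
  have ss: "(x \<circ> s k) \<circ> s k = x" by (simp add: fun_eq_iff)
  show "Tr_mult n t k (Tb n x) w = Tb n (x \<circ> s k) w"
  proof (cases "w = x \<circ> s k")
    case True
    then show ?thesis using x sx l1 ss ne by (simp add: Tr_mult_def Tb_def perms_def)
  next
    case False
    have "w \<circ> s k = x \<Longrightarrow> w = x \<circ> s k" by (metis comp_assoc s_comp_s comp_id)
    then show ?thesis using False x sx l1 ss
      by (auto simp: Tr_mult_def Tb_def perms_def)
  qed
qed

text \<open>Every \<open>T\<^sub>w\<close> arises from \<open>T\<^sub>1\<close> by right multiplications along a reduced word of \<open>w\<close>.\<close>

lemma hlinear_equivariant_eq_on_Hn:
  assumes lF: "hlinear F" and lG: "hlinear G" and cF: "Tr_equivariant n t F"
    and cG: "Tr_equivariant n t G"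
    and e: "F (Tb n id) = G (Tb n id)"
  shows "h \<in> Hn n \<Longrightarrow> F h = G h"
proof -
  have basis: "w permutes {1..n} \<Longrightarrow> F (Tb n w) = G (Tb n w)" for w
  proof (induction "len n w" arbitrary: w rule: less_induct)
    case less
    note IH0 = less(1) and wp = less(2)
    show ?case
    proof (cases "w = id")
      case True then show ?thesis using e by simp
    next
      case False
      obtain k where k: "1 \<le> k" "k < n" "w (Suc k) < w k" using exists_right_descent[OF wp False]
        by blast
      define w' where "w' = w \<circ> s k"
      have w': "w' permutes {1..n}" unfolding w'_def
        by (rule permutes_compose[OF s_permutes[OF k(1,2)] wp])
      have up: "w' k < w' (Suc k)" using k by (simp add: w'_def s_apply)
      have lw: "len n w' < len n w" unfolding w'_def using len_comp_s_less_iff[OF wp k(1,2)] k(3)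
        by simp
      have ww: "w' \<circ> s k = w" by (simp add: w'_def fun_eq_iff)
      have "Tb n w = Tr_mult n t k (Tb n w')" using Tr_mult_Tb_ascent[OF w' k(1,2) up, of t] ww
        by simp
      then show ?thesis using cF cG k IH0[OF lw w'] unfolding Tr_equivariant_def by metis
    qed
  qed
  assume h: "h \<in> Hn n"
  have "F h = F (\<Sum>w\<in>perms n. hsmult (h w) (Tb n w))" using hecke_basis_expansion[OF h] by simp
  also have "\<dots> = (\<Sum>w\<in>perms n. hsmult (h w) (F (Tb n w)))"
    by (simp add: hlinear_sum[OF lF] hlinear_hsmult[OF lF])
  also have "\<dots> = (\<Sum>w\<in>perms n. hsmult (h w) (G (Tb n w)))" using basis by (simp add: perms_def)
  also have "\<dots> = G (\<Sum>w\<in>perms n. hsmult (h w) (Tb n w))"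
    by (simp add: hlinear_sum[OF lG] hlinear_hsmult[OF lG])
  also have "\<dots> = G h" using hecke_basis_expansion[OF h] by simp
  finally show ?thesis .
qed


section \<open>The algebra \<open>H\<^sub>n\<close>\<close>

lemma hmult_Tb: "w permutes {1..n} \<Longrightarrow> hmult n t (Tb n w) g = Tw_mult n t w g"
proof -
  assume w: "w permutes {1..n}"
  have "hmult n t (Tb n w) g = (\<Sum>v\<in>perms n. if v = w then Tw_mult n t w g else 0)"
    unfolding hmult_def by (rule sum.cong) (auto simp: Tb_def)
  also have "\<dots> = Tw_mult n t w g" using w finite_perms by (simp add: perms_def)
  finally show ?thesis .
qed

lemma hlinear_hmult: "hlinear (hmult n t a)"
proof -
  have L: "v \<in> perms n \<Longrightarrow> hlinear (Tw_mult n t v)" for v using Tw_mult_hlinear_equivariant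
    by (auto simp: perms_def)
  show ?thesis unfolding hlinear_def
  proof (intro conjI allI)
    fix x y
    show "hmult n t a (x + y) = hmult n t a x + hmult n t a y"
    proof -
      have "hmult n t a (x + y) = (\<Sum>w\<in>perms n. hsmult (a w) (Tw_mult n t w x) + hsmult (a w) (Tw_mult n t w y))"
        unfolding hmult_def by (rule sum.cong) (simp_all only: hlinear_add[OF L] hsmult_add_right)
      then show ?thesis by (simp only: sum.distrib hmult_def)
    qed
  next
    fix c x
    show "hmult n t a (hsmult c x) = hsmult c (hmult n t a x)"
      unfolding hmult_def using L
        by (simp add: hlinear_hsmult hsmult_sum hsmult_hsmult mult.commute)
  qed
qed

lemma Tr_equivariant_hmult: "Tr_equivariant n t (hmult n t a)"
proof -
  have R: "v \<in> perms n \<Longrightarrow> Tr_equivariant n t (Tw_mult n t v)" for v using Tw_mult_hlinear_equivariant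
    by (auto simp: perms_def)
  show ?thesis unfolding Tr_equivariant_def
  proof (intro allI impI)
    fix k h assume k: "1 \<le> k \<and> k < n"
    have "hmult n t a (Tr_mult n t k h) = (\<Sum>v\<in>perms n. hsmult (a v) (Tr_mult n t k (Tw_mult n t v h)))"
      unfolding hmult_def using R k by (simp add: Tr_equivariant_def)
    also have "\<dots> = Tr_mult n t k (hmult n t a h)"
      unfolding hmult_def
        by (simp add: hlinear_sum[OF hlinear_Tr_mult] hlinear_hsmult[OF hlinear_Tr_mult])
    finally show "hmult n t a (Tr_mult n t k h) = Tr_mult n t k (hmult n t a h)" .
  qed
qed

lemma hmult_Tb_id: "(a::'a::comm_ring_1 hecke) \<in> Hn n \<Longrightarrow> hmult n t a (Tb n id) = a"
proof -
  assume a: "a \<in> Hn n"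
  have "hmult n t a (Tb n id) = (\<Sum>w\<in>perms n. hsmult (a w) (Tb n w))"
    unfolding hmult_def by (rule sum.cong) (auto simp: Tw_mult_Tb_id perms_def)
  then show ?thesis using hecke_basis_expansion[OF a] by simp
qed

lemma Hn_add: "(x::'a::comm_ring_1 hecke) \<in> Hn n \<Longrightarrow> y \<in> Hn n \<Longrightarrow> x + y \<in> Hn n" by (simp add: Hn_def)
lemma Hn_smult: "x \<in> Hn n \<Longrightarrow> hsmult (c::'a::comm_ring_1) x \<in> Hn n" by (simp add: Hn_def hsmult_def)
lemma Hn_sum: "(\<And>i. i \<in> A \<Longrightarrow> f i \<in> Hn n) \<Longrightarrow> (\<Sum>i\<in>A. f i) \<in> Hn n"
  by (simp add: Hn_def sum_fun_apply)

lemma hmult_in_Hn: "g \<in> Hn n \<Longrightarrow> hmult n t a g \<in> Hn n"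
  unfolding hmult_def by (intro Hn_sum Hn_smult Tw_mult_in_Hn) (auto simp: perms_def)

lemma hmult_add_left: "hmult n t (a + b) g = hmult n t a g + hmult n t b g"
  unfolding hmult_def by (simp add: hsmult_add_left sum.distrib)

lemma hmult_hsmult_left: "hmult n t (hsmult c a) g = hsmult c (hmult n t a g)"
  unfolding hmult_def hsmult_sum by (simp add: hsmult_apply hsmult_hsmult)

lemma hmult_hsmult_right: "hmult n t a (hsmult c x) = hsmult c (hmult n t a x)"
  by (rule hlinear_hsmult[OF hlinear_hmult])

lemma hmult_id_left: "hmult n t (Tb n id) g = g"
  by (simp add: hmult_Tb Tw_mult_id)

lemma hmult_assoc:
  assumes b: "b \<in> Hn n" and g: "g \<in> Hn n"
  shows "hmult n t (hmult n t a b) g = hmult n t a (hmult n t b g)"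
proof -
  have "hmult n t (hmult n t a b) g = (hmult n t a \<circ> hmult n t b) g"
  proof (rule hlinear_equivariant_eq_on_Hn[OF hlinear_hmult hlinear_comp[OF hlinear_hmult hlinear_hmult] Tr_equivariant_hmult
        Tr_equivariant_comp[OF Tr_equivariant_hmult Tr_equivariant_hmult] _ g])
    show "hmult n t (hmult n t a b) (Tb n id) = (hmult n t a \<circ> hmult n t b) (Tb n id)"
      using b by (simp add: hmult_Tb_id hmult_in_Hn)
  qed
  then show ?thesis by simp
qed

definition hinverse :: "nat \<Rightarrow> 'a::comm_ring_1 \<Rightarrow> 'a hecke \<Rightarrow> 'a hecke \<Rightarrow> bool" where
  "hinverse n t x y \<longleftrightarrow> x \<in> Hn n \<and> y \<in> Hn n \<and> hmult n t x y = Tb n id \<and> hmult n t y x = Tb n id"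

lemma hinv_eq:
  assumes "hinverse n t x y" shows "hinv n t x = y"
  unfolding hinv_def
proof (rule the_equality)
  show "y \<in> Hn n \<and> hmult n t x y = Tb n id \<and> hmult n t y x = Tb n id" using assms
    by (simp add: hinverse_def)
next
  fix y' assume y': "y' \<in> Hn n \<and> hmult n t x y' = Tb n id \<and> hmult n t y' x = Tb n id"
  have x: "x \<in> Hn n" and y: "y \<in> Hn n" and yx: "hmult n t y x = Tb n id" using assms
    by (auto simp: hinverse_def)
  have "y' = hmult n t (hmult n t y x) y'" using yx by (simp add: hmult_id_left)
  also have "\<dots> = hmult n t y (hmult n t x y')" using x y' by (simp add: hmult_assoc)
  also have "\<dots> = y" using y' y by (simp add: hmult_Tb_id)
  finally show "y' = y" .
qed

lemma hinverse_hmult: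
  assumes "hinverse n t x y" "hinverse n t x' y'"
  shows "hinverse n t (hmult n t x x') (hmult n t y' y)"
proof -
  have h: "x \<in> Hn n" "y \<in> Hn n" "x' \<in> Hn n" "y' \<in> Hn n" "hmult n t x y = Tb n id"
     "hmult n t y x = Tb n id" "hmult n t x' y' = Tb n id" "hmult n t y' x' = Tb n id"
    using assms by (auto simp: hinverse_def)
  have "hmult n t (hmult n t x x') (hmult n t y' y) = hmult n t x (hmult n t x' (hmult n t y' y))"
    using h by (simp add: hmult_assoc hmult_in_Hn)
  also have "\<dots> = hmult n t x (hmult n t (hmult n t x' y') y)" using h hmult_assoc[of y' n y t x']
    by simp
  also have "\<dots> = Tb n id" using h by (simp add: hmult_id_left)
  finally have 1: "hmult n t (hmult n t x x') (hmult n t y' y) = Tb n id" .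
  have "hmult n t (hmult n t y' y) (hmult n t x x') = hmult n t y' (hmult n t y (hmult n t x x'))"
    using h by (simp add: hmult_assoc hmult_in_Hn)
  also have "\<dots> = hmult n t y' (hmult n t (hmult n t y x) x')" using h hmult_assoc[of x n x' t y]
    by simp
  also have "\<dots> = Tb n id" using h by (simp add: hmult_id_left)
  finally have 2: "hmult n t (hmult n t y' y) (hmult n t x x') = Tb n id" .
  show ?thesis using 1 2 h by (simp add: hinverse_def hmult_in_Hn)
qed

lemma hinverse_id: "hinverse n t (Tb n id) (Tb n id)"
  by (simp add: hinverse_def Tb_in_Hn hmult_id_left)

lemma hinv_id: "hinv n t (Tb n id) = Tb n id"
  by (rule hinv_eq[OF hinverse_id])

lemma Ti_mult_Tb_descent:
  assumes x: "x permutes {1..n}" and i: "1 \<le> i" "i < n" and dn: "inv x (Suc i) < inv x i"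
  shows "Ti_mult n t i (Tb n x) = hsmult (t - 1) (Tb n x) + hsmult t (Tb n (s i \<circ> x))"
proof
  fix w
  have sx: "s i \<circ> x permutes {1..n}" by (rule permutes_compose[OF x s_permutes[OF i]])
  have l1: "len n x = Suc (len n (s i \<circ> x))" by (rule len_s_comp_descent[OF x i dn])
  have ne: "s i \<circ> x \<noteq> x" using l1 by auto
  have ss: "s i \<circ> (s i \<circ> x) = x" by (simp add: fun_eq_iff)
  have bk: "s i \<circ> w = x \<Longrightarrow> w = s i \<circ> x" by (metis comp_assoc s_comp_s id_comp)
  show "Ti_mult n t i (Tb n x) w = (hsmult (t - 1) (Tb n x) + hsmult t (Tb n (s i \<circ> x))) w"
  proof (cases "w = x")
    case True
    then show ?thesis using x sx l1 ss ne by (simp add: Ti_mult_def Tb_def perms_def hsmult_def)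
  next
    case False
    show ?thesis
    proof (cases "w = s i \<circ> x")
      case True
      then show ?thesis using x sx l1 ss ne by (simp add: Ti_mult_def Tb_def perms_def hsmult_def)
    next
      case False
      then show ?thesis using \<open>w \<noteq> x\<close> bk x sx
        by (auto simp: Ti_mult_def Tb_def perms_def hsmult_def)
    qed
  qed
qed


lemma Tw_mult_s:
  assumes i: "1 \<le> i" "i < n"
  shows "Tw_mult n t (s i) g = Ti_mult n t i g"
proof -
  have sp: "s i permutes {1..n}" by (rule s_permutes[OF i])
  have nid: "s i \<noteq> id" by (metis Suc_n_not_n id_apply s_apply)
  let ?d = "left_descent n (s i)"
  note P = left_descent[OF sp nid]
  have "len n (s ?d \<circ> s i) = 0" using P(4) len_s[OF i] by simp
  then have "s ?d \<circ> s i = id" using len_eq_0_imp_id permutes_compose[OF sp s_permutes[OF P(1,2)]]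
    by blast
  then have sd: "s ?d = s i"
  proof -
    assume a: "s ?d \<circ> s i = id"
    have "s ?d = (s ?d \<circ> s i) \<circ> s i" by (simp add: fun_eq_iff)
    then show ?thesis using a by simp
  qed
  have "s i ?d = Suc ?d" using fun_cong[OF sd, of ?d] by (simp add: s_apply)
  then have "?d = i" by (simp add: s_apply split: if_splits)
  then show ?thesis using Tw_mult_step[OF sp nid, of t g] \<open>s ?d \<circ> s i = id\<close>
    by (simp add: Tw_mult_id)
qed

lemma hmult_Ts: "1 \<le> i \<Longrightarrow> i < n \<Longrightarrow> hmult n t (Tb n (s i)) g = Ti_mult n t i g"
  by (simp add: hmult_Tb[OF s_permutes] Tw_mult_s)

lemma Ti_mult_Tb_id: "1 \<le> i \<Longrightarrow> i < n \<Longrightarrow> Ti_mult n t i (Tb n id) = Tb n (s i)"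
  using Ti_mult_Tb_ascent[of id n i t] by (simp add: permutes_id)

lemma Ti_mult_Ts: "1 \<le> i \<Longrightarrow> i < n \<Longrightarrow>
   Ti_mult n t i (Tb n (s i)) = hsmult (t - 1) (Tb n (s i)) + hsmult t (Tb n id)"
proof -
  assume i: "1 \<le> i" "i < n"
  have iv: "inv (s i) = s i" using s_comp_s by (metis inv_unique_comp)
  have "inv (s i) (Suc i) < inv (s i) i" unfolding iv by (simp add: s_apply)
  from Ti_mult_Tb_descent[OF s_permutes[OF i] i this, of t] show ?thesis by (simp add: s_comp_s)
qed

lemma hinverse_Ts:
  fixes t ti :: "'a::comm_ring_1"
  assumes i: "1 \<le> i" "i < n" and tt: "t * ti = 1"
  shows "hinverse n t (Tb n (s i)) (hsmult ti (Tb n (s i) + hsmult (1 - t) (Tb n id)))"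
proof -
  let ?y = "hsmult ti (Tb n (s i) + hsmult (1 - t) (Tb n id))"
  have yH: "?y \<in> Hn n" by (intro Hn_smult Hn_add Tb_in_Hn)
  have key: "hsmult ti ((hsmult (t - 1) (Tb n (s i)) + hsmult t (Tb n id)) + hsmult (1 - t) (Tb n (s i))) = Tb n id"
  proof (rule ext)
    fix w
    have ra: "ti * (((t - 1) * a + t * b) + (1 - t) * a) = b" for a b :: 'a
    proof -
      have "ti * (((t - 1) * a + t * b) + (1 - t) * a) = (t * ti) * b" by (simp add: algebra_simps)
      then show ?thesis using tt by simp
    qed
    show "hsmult ti ((hsmult (t - 1) (Tb n (s i)) + hsmult t (Tb n id)) + hsmult (1 - t) (Tb n (s i))) w = Tb n id w"
      by (simp only: hsmult_apply plus_fun_def ra)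
  qed
  have e1: "hmult n t (Tb n (s i)) ?y = Tb n id"
    using key i
      by (simp only: hmult_Ts hlinear_hsmult[OF hlinear_Ti_mult] hlinear_add[OF hlinear_Ti_mult] Ti_mult_Ts Ti_mult_Tb_id)
  have e2: "hmult n t ?y (Tb n (s i)) = Tb n id"
    using key i by (simp only: hmult_hsmult_left hmult_add_left hmult_Ts hmult_id_left Ti_mult_Ts)
  show ?thesis using e1 e2 yH by (simp add: hinverse_def Tb_in_Hn)
qed

lemma ex_hinverse_Tb:
  fixes t :: "'a::comm_ring_1"
  assumes x: "x permutes {1..n}" and tu: "t dvd 1"
  shows "\<exists>y. hinverse n t (Tb n x) y"
  using x
proof (induction "len n x" arbitrary: x rule: less_induct)
  case less
  show ?case
  proof (cases "x = id")
    case True then show ?thesis using hinverse_id by blast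
  next
    case False
    let ?i = "left_descent n x"
    note P = left_descent[OF less(2) False]
    have sx: "s ?i \<circ> x permutes {1..n}" using permutes_compose[OF less(2) s_permutes[OF P(1,2)]] .
    obtain y' where y': "hinverse n t (Tb n (s ?i \<circ> x)) y'" using less(1)[OF _ sx] P by auto
    obtain ti where tt: "t * ti = 1" using tu by (metis dvdE)
    obtain yi where yi: "hinverse n t (Tb n (s ?i)) yi" using hinverse_Ts[OF P(1,2) tt] by blast
    have "inv (s ?i \<circ> x) ?i < inv (s ?i \<circ> x) (Suc ?i)"
      using inv_s_comp_apply[OF less(2) P(1,2)] len_s_comp_less_iff[OF less(2) P(1,2)] P(3) by simp
    then have "Ti_mult n t ?i (Tb n (s ?i \<circ> x)) = Tb n (s ?i \<circ> (s ?i \<circ> x))"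
      by (rule Ti_mult_Tb_ascent[OF sx P(1,2)])
    moreover have "s ?i \<circ> (s ?i \<circ> x) = x" by (simp add: fun_eq_iff)
    ultimately have "hmult n t (Tb n (s ?i)) (Tb n (s ?i \<circ> x)) = Tb n x"
      using P by (simp add: hmult_Ts)
    then show ?thesis using hinverse_hmult[OF yi y'] by metis
  qed
qed

lemma hinverse_hinv: "x permutes {1..n} \<Longrightarrow> (t::'a::comm_ring_1) dvd 1 \<Longrightarrow> hinverse n t (Tb n x) (hinv n t (Tb n x))"
  using ex_hinverse_Tb hinv_eq by metis


section \<open>Columns and their minimal coset representatives\<close>

lemma colsD:
  assumes "F \<in> cols n l"
  shows "F \<subseteq> {1..n}" "card F = l" "finite F" "l \<le> n"
    "finite ({1..n} - F)" "card ({1..n} - F) = n - l"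
proof -
  show F: "F \<subseteq> {1..n}" "card F = l" using assms by (auto simp: cols_def)
  show fin: "finite F" using F(1) finite_subset by blast
  show "l \<le> n" using card_mono[OF _ F(1)] F(2) by simp
  show "finite ({1..n} - F)" by simp
  show "card ({1..n} - F) = n - l" using F by (simp add: card_Diff_subset fin)
qed

lemma u_apply_le: "F \<in> cols n l \<Longrightarrow> 1 \<le> a \<Longrightarrow> a \<le> l \<Longrightarrow> u n F a = sorted_list_of_set F ! (a - 1)"
  using colsD by (simp add: u_def)

lemma u_apply_gt: "F \<in> cols n l \<Longrightarrow> l < a \<Longrightarrow> a \<le> n \<Longrightarrow> u n F a = sorted_list_of_set ({1..n} - F) ! (a - l - 1)"
  using colsD(2) by (simp add: u_def)

lemma u_apply_out: "F \<in> cols n l \<Longrightarrow> a \<notin> {1..n} \<Longrightarrow> u n F a = a"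
  using colsD(2,4)[of F n l] by (auto simp: u_def)

lemma u_in_col: assumes F: "F \<in> cols n l" and a: "1 \<le> a" "a \<le> l" shows "u n F a \<in> F"
proof -
  note P = strict_sorted_list_of_set[of F] set_sorted_list_of_set[OF colsD(3)[OF F]] length_sorted_list_of_set
  have "a - 1 < length (sorted_list_of_set F)" using a P(3) colsD(2)[OF F] by simp
  then have "sorted_list_of_set F ! (a - 1) \<in> set (sorted_list_of_set F)" by (rule nth_mem)
  then have "u n F a \<in> set (sorted_list_of_set F)" unfolding u_apply_le[OF F a] .
  then show ?thesis unfolding P(2) .
qed

lemma u_in_complement: assumes F: "F \<in> cols n l" and a: "l < a" "a \<le> n" shows "u n F a \<in> {1..n} - F"
proof -
  note P = strict_sorted_list_of_set[of "{1..n} - F"] set_sorted_list_of_set[OF colsD(5)[OF F]] length_sorted_list_of_set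
  have "a - l - 1 < length (sorted_list_of_set ({1..n} - F))" using a P(3) colsD(6)[OF F] by simp
  then have "sorted_list_of_set ({1..n} - F) ! (a - l - 1) \<in> set (sorted_list_of_set ({1..n} - F))"
    by (rule nth_mem)
  then have "u n F a \<in> set (sorted_list_of_set ({1..n} - F))" unfolding u_apply_gt[OF F a] .
  then show ?thesis unfolding P(2) .
qed

lemma u_less_u_le: assumes F: "F \<in> cols n l"
  and ab: "1 \<le> a" "a < b" "b \<le> l" shows "u n F a < u n F b"
proof -
  note P = strict_sorted_list_of_set[of F] set_sorted_list_of_set[OF colsD(3)[OF F]] length_sorted_list_of_set
  have "b - 1 < length (sorted_list_of_set F)" using ab P(3) colsD(2)[OF F] by simp
  then have "sorted_list_of_set F ! (a - 1) < sorted_list_of_set F ! (b - 1)"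
    using sorted_wrt_nth_less[OF P(1), of "a - 1" "b - 1"] ab by simp
  then show ?thesis using u_apply_le[OF F] ab by simp
qed

lemma u_less_u_gt: assumes F: "F \<in> cols n l"
  and ab: "l < a" "a < b" "b \<le> n" shows "u n F a < u n F b"
proof -
  note P = strict_sorted_list_of_set[of "{1..n} - F"] set_sorted_list_of_set[OF colsD(5)[OF F]] length_sorted_list_of_set
  have "b - l - 1 < length (sorted_list_of_set ({1..n} - F))" using ab P(3) colsD(6)[OF F] by simp
  then have "sorted_list_of_set ({1..n} - F) ! (a - l - 1) < sorted_list_of_set ({1..n} - F) ! (b - l - 1)"
    using sorted_wrt_nth_less[OF P(1), of "a - l - 1" "b - l - 1"] ab by simp
  then show ?thesis using u_apply_gt[OF F] ab by simp
qed

lemma u_in_range: assumes F: "F \<in> cols n l" and a: "a \<in> {1..n}" shows "u n F a \<in> {1..n}"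
proof (cases "a \<le> l")
  case True
  then have "u n F a \<in> F" using u_in_col[OF F] a by simp
  then show ?thesis using colsD(1)[OF F] by blast
next
  case False
  then show ?thesis using u_in_complement[OF F, of a] a by simp
qed

lemma inj_on_u: assumes F: "F \<in> cols n l" shows "inj_on (u n F) {1..n}"
proof (rule inj_onI)
  fix a b assume a: "a \<in> {1..n}" and b: "b \<in> {1..n}" and e: "u n F a = u n F b"
  show "a = b"
  proof (rule ccontr)
    assume "a \<noteq> b"
    then consider "a < b" | "b < a" by linarith
    then show False
    proof cases
      case 1
      then show False using a b e u_less_u_le[OF F, of a b] u_less_u_gt[OF F, of a b]
          u_in_col[OF F, of a] u_in_complement[OF F, of b]
        by (cases "b \<le> l"; cases "a \<le> l") auto
    next
      case 2
      then show False using a b e u_less_u_le[OF F, of b a] u_less_u_gt[OF F, of b a]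
          u_in_col[OF F, of b] u_in_complement[OF F, of a]
        by (cases "b \<le> l"; cases "a \<le> l") auto
    qed
  qed
qed

lemma u_permutes: assumes F: "F \<in> cols n l" shows "u n F permutes {1..n}"
proof (rule bij_imp_permutes)
  have sub: "u n F ` {1..n} \<subseteq> {1..n}" using u_in_range[OF F] by auto
  have "u n F ` {1..n} = {1..n}" using endo_inj_surj[OF _ sub inj_on_u[OF F]] by simp
  then show "bij_betw (u n F) {1..n} {1..n}" using inj_on_u[OF F] by (simp add: bij_betw_def)
  show "\<And>x. x \<notin> {1..n} \<Longrightarrow> u n F x = x" using u_apply_out[OF F] by blast
qed

lemma u_image_initial: assumes F: "F \<in> cols n l" shows "u n F ` {1..l} = F"
proof
  show "u n F ` {1..l} \<subseteq> F" using u_in_col[OF F] by auto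
  show "F \<subseteq> u n F ` {1..l}"
  proof
    fix x assume x: "x \<in> F"
    note P = strict_sorted_list_of_set[of F] set_sorted_list_of_set[OF colsD(3)[OF F]] length_sorted_list_of_set
    obtain i where i: "i < length (sorted_list_of_set F)" "sorted_list_of_set F ! i = x"
      using x P(2) by (metis in_set_conv_nth)
    have "u n F (Suc i) = x" using u_apply_le[OF F, of "Suc i"] i P(3) colsD(2)[OF F] by simp
    moreover have "Suc i \<in> {1..l}" using i P(3) colsD(2)[OF F] by simp
    ultimately show "x \<in> u n F ` {1..l}" by force
  qed
qed


section \<open>Parabolic decomposition\<close>

lemma stab_permutes: "w \<in> stab n l \<Longrightarrow> w permutes {1..n}"
  by (simp add: stab_def perms_def)

lemma stab_apply_le_iff:
  assumes w: "w \<in> stab n l" and x: "x \<in> {1..n}" and ln: "l \<le> n"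
  shows "w x \<le> l \<longleftrightarrow> x \<le> l"
proof
  have wp: "w permutes {1..n}" using stab_permutes[OF w] .
  have img: "w ` {1..l} = {1..l}" using w by (simp add: stab_def)
  assume "w x \<le> l"
  moreover have "1 \<le> w x" using permutes_apply_in[OF wp x] by simp
  ultimately have "w x \<in> w ` {1..l}" using img by simp
  then obtain y where y: "y \<in> {1..l}" "w y = w x" by auto
  then have "y = x" using permutes_apply_eq_iff[OF wp] by blast
  then show "x \<le> l" using y by simp
next
  have img: "w ` {1..l} = {1..l}" using w by (simp add: stab_def)
  assume "x \<le> l"
  then have "x \<in> {1..l}" using x by simp
  then have "w x \<in> {1..l}" using img by blast
  then show "w x \<le> l" by simp
qed

lemma s_image_initial: "1 \<le> k \<Longrightarrow> k \<noteq> l \<Longrightarrow> s k ` {1..l} = {1..l}"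
proof -
  assume k1: "1 \<le> k" and kl: "k \<noteq> l"
  have sub: "s k ` {1..l} \<subseteq> {1..l}" if "k \<noteq> l" "1 \<le> k" for k l :: nat using that
    by (auto simp: s_apply)
  have "{1..l} = s k ` (s k ` {1..l})" by (simp add: image_comp)
  also have "\<dots> \<subseteq> s k ` {1..l}" using sub[OF kl k1] by blast
  finally show ?thesis using sub[OF kl k1] by blast
qed

lemma stab_comp_s:
  assumes w: "w \<in> stab n l" and k: "1 \<le> k" "k < n" "k \<noteq> l"
  shows "w \<circ> s k \<in> stab n l"
proof -
  have "(w \<circ> s k) ` {1..l} = w ` (s k ` {1..l})" by (simp add: image_comp)
  also have "\<dots> = {1..l}" using s_image_initial[OF k(1) k(3)] w by (simp add: stab_def)
  finally show ?thesis using w permutes_compose[OF s_permutes[OF k(1,2)] stab_permutes[OF w]]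
    by (simp add: stab_def perms_def)
qed

lemma Tw_mult_u_Tb_stab:
  fixes t :: "'a::comm_ring_1"
  assumes F: "F \<in> cols n l"
  shows "w \<in> stab n l \<Longrightarrow> Tw_mult n t (u n F) (Tb n w) = Tb n (u n F \<circ> w)"
proof (induction "len n w" arbitrary: w rule: less_induct)
  case less
  have wp: "w permutes {1..n}" using stab_permutes[OF less(2)] .
  have up: "u n F permutes {1..n}" using u_permutes[OF F] .
  have ln: "l \<le> n" using colsD(4)[OF F] .
  show ?case
  proof (cases "w = id")
    case True then show ?thesis using Tw_mult_Tb_id[OF up] by simp
  next
    case False
    obtain k where k: "1 \<le> k" "k < n" "w (Suc k) < w k" using exists_right_descent[OF wp False]
      by blast
    have kl: "k \<noteq> l"
    proof
      assume "k = l"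
      then have "w k \<le> l" "\<not> w (Suc k) \<le> l" using stab_apply_le_iff[OF less(2) _ ln, of k]
          stab_apply_le_iff[OF less(2) _ ln, of "Suc k"] k by auto
      then show False using k(3) by simp
    qed
    define w' where "w' = w \<circ> s k"
    have w'S: "w' \<in> stab n l" unfolding w'_def by (rule stab_comp_s[OF less(2) k(1,2) kl])
    have w'p: "w' permutes {1..n}" using stab_permutes[OF w'S] .
    have upk: "w' k < w' (Suc k)" using k by (simp add: w'_def s_apply)
    have lw: "len n w' < len n w" unfolding w'_def using len_comp_s_less_iff[OF wp k(1,2)] k(3)
      by simp
    have ww: "w' \<circ> s k = w" by (simp add: w'_def fun_eq_iff)
    have IH: "Tw_mult n t (u n F) (Tb n w') = Tb n (u n F \<circ> w')" using less(1)[OF lw w'S] .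
    have Tbw: "Tb n w = Tr_mult n t k (Tb n w')" using Tr_mult_Tb_ascent[OF w'p k(1,2) upk, of t] ww
      by simp
    have rc: "Tr_equivariant n t (Tw_mult n t (u n F))" using Tw_mult_hlinear_equivariant[OF up]
      by blast
    have blk: "w' k \<le> l \<longleftrightarrow> w' (Suc k) \<le> l"
      using stab_apply_le_iff[OF w'S _ ln, of k] stab_apply_le_iff[OF w'S _ ln, of "Suc k"] k kl
        by auto
    have r1: "1 \<le> w' k" "w' (Suc k) \<le> n"
      using permutes_apply_in[OF w'p, of k] permutes_apply_in[OF w'p, of "Suc k"] k by auto
    have "(u n F \<circ> w') k < (u n F \<circ> w') (Suc k)"
      using u_less_u_le[OF F r1(1) upk] u_less_u_gt[OF F _ upk r1(2)] blk by (cases "w' k \<le> l") auto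
    then have "Tr_mult n t k (Tb n (u n F \<circ> w')) = Tb n (u n F \<circ> w' \<circ> s k)"
      using Tr_mult_Tb_ascent[OF permutes_compose[OF w'p up] k(1,2)] by (simp add: o_assoc)
    moreover have "u n F \<circ> w' \<circ> s k = u n F \<circ> w" using ww by (simp add: comp_assoc)
    ultimately show ?thesis using Tbw rc k IH unfolding Tr_equivariant_def by simp
  qed
qed

lemma Hsub_imp_Hn: "g \<in> Hsub n l \<Longrightarrow> g \<in> Hn n"
  by (auto simp: Hsub_def Hn_def stab_def)

lemma hmult_u_Hsub:
  fixes t :: "'a::comm_ring_1"
  assumes F: "F \<in> cols n l" and g: "g \<in> Hsub n l"
  shows "hmult n t (Tb n (u n F)) g = (\<lambda>v. if inv (u n F) \<circ> v \<in> stab n l then g (inv (u n F) \<circ> v) else 0)"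
proof
  fix v
  have up: "u n F permutes {1..n}" using u_permutes[OF F] .
  have gH: "g \<in> Hn n" using Hsub_imp_Hn[OF g] .
  have "hmult n t (Tb n (u n F)) g = Tw_mult n t (u n F) (\<Sum>w\<in>perms n. hsmult (g w) (Tb n w))"
    using hmult_Tb[OF up] hecke_basis_expansion[OF gH] by metis
  also have "\<dots> = (\<Sum>w\<in>perms n. hsmult (g w) (Tw_mult n t (u n F) (Tb n w)))"
    using conjunct1[OF Tw_mult_hlinear_equivariant[OF up, of t]]
      by (simp add: hlinear_sum hlinear_hsmult)
  finally have e: "hmult n t (Tb n (u n F)) g v = (\<Sum>w\<in>perms n. g w * Tw_mult n t (u n F) (Tb n w) v)"
    by (simp add: sum_fun_apply hsmult_apply)
  have "(\<Sum>w\<in>perms n. g w * Tw_mult n t (u n F) (Tb n w) v) =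
        (\<Sum>w\<in>perms n. if w = inv (u n F) \<circ> v then (if w \<in> stab n l then g w else 0) else 0)"
  proof (rule sum.cong)
    fix w assume wP: "w \<in> perms n"
    show "g w * Tw_mult n t (u n F) (Tb n w) v = (if w = inv (u n F) \<circ> v then (if w \<in> stab n l then g w else 0) else 0)"
    proof (cases "w \<in> stab n l")
      case False
      then show ?thesis using g by (auto simp: Hsub_def)
    next
      case True
      have uw: "u n F \<circ> w \<in> perms n" using permutes_compose[OF stab_permutes[OF True] up]
        by (simp add: perms_def)
      have eq: "v = u n F \<circ> w \<longleftrightarrow> w = inv (u n F) \<circ> v"
        using up by (metis comp_assoc o_id id_o permutes_inv_o)
      have "Tw_mult n t (u n F) (Tb n w) v = Tb n (u n F \<circ> w) v"
        using Tw_mult_u_Tb_stab[OF F True, of t] by simp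
      then show ?thesis using True uw eq by (auto simp: Tb_def)
    qed
  qed simp
  also have "\<dots> = (if inv (u n F) \<circ> v \<in> perms n then (if inv (u n F) \<circ> v \<in> stab n l then g (inv (u n F) \<circ> v) else 0) else 0)"
    by (rule sum.delta[OF finite_perms])
  also have "\<dots> = (if inv (u n F) \<circ> v \<in> stab n l then g (inv (u n F) \<circ> v) else 0)"
    by (auto simp: stab_def)
  finally show "hmult n t (Tb n (u n F)) g v = (if inv (u n F) \<circ> v \<in> stab n l then g (inv (u n F) \<circ> v) else 0)"
    using e by simp
qed


text \<open>The components \<open>h\<^sub>F\<close> of \<open>h = \<Sum>\<^sub>F T\<^bsub>u\<^sub>F\<^esub> h\<^sub>F\<close> are read off the cosets
  \<open>u\<^sub>F S\<^bsub>n,\<varpi>\<^sub>l\<^esub>\<close>, on which \<open>T\<^bsub>u\<^sub>F\<^esub> T\<^sub>w = T\<^bsub>u\<^sub>F w\<^esub>\<close>.\<close>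

definition coset_coeff :: "nat \<Rightarrow> nat \<Rightarrow> 'a::comm_ring_1 hecke \<Rightarrow> nat set \<Rightarrow> 'a hecke" where
  "coset_coeff n l h F = (if F \<in> cols n l then (\<lambda>w. if w \<in> stab n l then h (u n F \<circ> w) else 0) else 0)"

lemma finite_cols: "finite (cols n l)"
proof -
  have "cols n l \<subseteq> Pow {1..n}" by (auto simp: cols_def)
  then show ?thesis by (rule finite_subset) simp
qed

lemma inv_u_comp_in_stab_iff:
  assumes F: "F \<in> cols n l"
  shows "inv (u n F) \<circ> v \<in> stab n l \<longleftrightarrow> v \<in> perms n \<and> v ` {1..l} = F"
proof
  have up: "u n F permutes {1..n}" using u_permutes[OF F] .
  assume a: "inv (u n F) \<circ> v \<in> stab n l"
  have vv: "u n F \<circ> (inv (u n F) \<circ> v) = v" using up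
    by (simp add: comp_assoc[symmetric] permutes_inv_o)
  have "v permutes {1..n}" using permutes_compose[OF stab_permutes[OF a] up] vv by simp
  moreover have "v ` {1..l} = u n F ` ((inv (u n F) \<circ> v) ` {1..l})"
    using vv by (metis image_comp)
  then have "v ` {1..l} = F" using a u_image_initial[OF F] by (simp add: stab_def)
  ultimately show "v \<in> perms n \<and> v ` {1..l} = F" by (simp add: perms_def)
next
  have up: "u n F permutes {1..n}" using u_permutes[OF F] .
  assume a: "v \<in> perms n \<and> v ` {1..l} = F"
  have "(inv (u n F) \<circ> v) ` {1..l} = inv (u n F) ` (v ` {1..l})" by (rule image_comp[symmetric])
  also have "\<dots> = inv (u n F) ` (u n F ` {1..l})" using a u_image_initial[OF F] by simp
  also have "\<dots> = {1..l}" using up by (simp add: image_comp permutes_inv_o)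
  finally show "inv (u n F) \<circ> v \<in> stab n l"
    using a permutes_compose[OF _ permutes_inv[OF up], of v] by (simp add: stab_def perms_def)
qed

lemma image_initial_in_cols:
  assumes v: "v \<in> perms n" and ln: "l \<le> n"
  shows "v ` {1..l} \<in> cols n l"
proof -
  have vp: "v permutes {1..n}" using v by (simp add: perms_def)
  have "inj_on v {1..l}" using permutes_inj[OF vp] by (simp add: inj_on_def inj_def)
  then have "card (v ` {1..l}) = l" by (simp add: card_image)
  moreover have "v ` {1..l} \<subseteq> {1..n}" using permutes_apply_in[OF vp] ln by auto
  ultimately show ?thesis by (simp add: cols_def)
qed

lemma sum_coset_decomposition:
  fixes t :: "'a::comm_ring_1"
  assumes g: "\<And>F. g F \<in> Hsub n l" and ln: "l \<le> n"
  shows "(\<Sum>F\<in>cols n l. hmult n t (Tb n (u n F)) (g F)) =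
     (\<lambda>v. if v \<in> perms n then g (v ` {1..l}) (inv (u n (v ` {1..l})) \<circ> v) else 0)"
proof
  fix v
  have "(\<Sum>F\<in>cols n l. hmult n t (Tb n (u n F)) (g F)) v =
     (\<Sum>F\<in>cols n l. if F = v ` {1..l} then (if v \<in> perms n then g F (inv (u n F) \<circ> v) else 0) else 0)"
    unfolding sum_fun_apply
  proof (rule sum.cong)
    fix F assume F: "F \<in> cols n l"
    show "hmult n t (Tb n (u n F)) (g F) v =
      (if F = v ` {1..l} then (if v \<in> perms n then g F (inv (u n F) \<circ> v) else 0) else 0)"
      unfolding hmult_u_Hsub[OF F g] using inv_u_comp_in_stab_iff[OF F, of v] by auto
  qed simp
  also have "\<dots> = (if v ` {1..l} \<in> cols n l then (if v \<in> perms n then g (v ` {1..l}) (inv (u n (v ` {1..l})) \<circ> v) else 0) else 0)"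
    by (rule sum.delta[OF finite_cols])
  also have "\<dots> = (if v \<in> perms n then g (v ` {1..l}) (inv (u n (v ` {1..l})) \<circ> v) else 0)"
    using image_initial_in_cols[OF _ ln, of v] by auto
  finally show "(\<Sum>F\<in>cols n l. hmult n t (Tb n (u n F)) (g F)) v =
     (if v \<in> perms n then g (v ` {1..l}) (inv (u n (v ` {1..l})) \<circ> v) else 0)" .
qed

lemma coset_coeff_in_Hsub: "coset_coeff n l h F \<in> Hsub n l"
  by (simp add: coset_coeff_def Hsub_def)

lemma sum_coset_coeff:
  fixes t :: "'a::comm_ring_1"
  assumes h: "h \<in> Hn n" and ln: "l \<le> n"
  shows "h = (\<Sum>F\<in>cols n l. hmult n t (Tb n (u n F)) (coset_coeff n l h F))"
  unfolding sum_coset_decomposition[OF coset_coeff_in_Hsub ln]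
proof
  fix v
  show "h v = (if v \<in> perms n then coset_coeff n l h (v ` {1..l}) (inv (u n (v ` {1..l})) \<circ> v) else 0)"
  proof (cases "v \<in> perms n")
    case False
    then show ?thesis using h by (simp add: Hn_def)
  next
    case True
    let ?F = "v ` {1..l}"
    have F: "?F \<in> cols n l" using image_initial_in_cols[OF True ln] .
    have "inv (u n ?F) \<circ> v \<in> stab n l" using inv_u_comp_in_stab_iff[OF F] True by simp
    moreover have "u n ?F \<circ> (inv (u n ?F) \<circ> v) = v"
      using u_permutes[OF F] by (simp add: comp_assoc[symmetric] permutes_inv_o)
    ultimately show ?thesis using True F by (simp add: coset_coeff_def)
  qed
qed

lemma coset_decomposition_unique:
  fixes t :: "'a::comm_ring_1"
  assumes g: "\<And>F. g F \<in> Hsub n l" "\<And>F. F \<notin> cols n l \<Longrightarrow> g F = 0" and ln: "l \<le> n"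
    and h: "h = (\<Sum>F\<in>cols n l. hmult n t (Tb n (u n F)) (g F))"
  shows "g = coset_coeff n l h"
proof (intro ext)
  fix F w
  have h': "h = (\<lambda>v. if v \<in> perms n then g (v ` {1..l}) (inv (u n (v ` {1..l})) \<circ> v) else 0)"
    using h sum_coset_decomposition[OF g(1) ln] by simp
  show "g F w = coset_coeff n l h F w"
  proof (cases "F \<in> cols n l \<and> w \<in> stab n l")
    case False
    then show ?thesis using g by (auto simp: coset_coeff_def Hsub_def)
  next
    case True
    then have F: "F \<in> cols n l" and w: "w \<in> stab n l" by auto
    have iv: "inv (u n F) \<circ> (u n F \<circ> w) = w"
      using u_permutes[OF F] by (simp add: comp_assoc[symmetric] permutes_inv_o)
    then have "u n F \<circ> w \<in> perms n \<and> (u n F \<circ> w) ` {1..l} = F"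
      using inv_u_comp_in_stab_iff[OF F, of "u n F \<circ> w"] w by simp
    then show ?thesis using h' iv F w by (simp add: coset_coeff_def)
  qed
qed

lemma decomp_eq_coset_coeff:
  fixes t :: "'a::comm_ring_1"
  assumes h: "h \<in> Hn n" and ln: "l \<le> n"
  shows "decomp n t l h = coset_coeff n l h"
  unfolding decomp_def
proof (rule the_equality)
  show "(\<forall>F. coset_coeff n l h F \<in> Hsub n l) \<and> (\<forall>F. F \<notin> cols n l \<longrightarrow> coset_coeff n l h F = 0) \<and>
      h = (\<Sum>F\<in>cols n l. hmult n t (Tb n (u n F)) (coset_coeff n l h F))"
    by (intro conjI allI impI coset_coeff_in_Hsub sum_coset_coeff[OF h ln]) (simp add: coset_coeff_def)
qed (use coset_decomposition_unique[OF _ _ ln] in blast)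


section \<open>The action of \<open>s\<^sub>j\<close> on columns\<close>

lemma s_less_s_if_not_both:
  assumes "\<not> (j \<in> A \<and> Suc j \<in> A)" "x \<in> A" "y \<in> A" "x < y"
  shows "s j x < s j y"
  using assms by (auto simp: s_apply)

lemma sorted_list_of_set_image_strict_mono:
  fixes f :: "'a::linorder \<Rightarrow> 'b::linorder"
  assumes fin: "finite A" and mono: "strict_mono_on A f"
  shows "sorted_list_of_set (f ` A) = map f (sorted_list_of_set A)"
proof -
  have "sorted_wrt (<) (map f (sorted_list_of_set A))"
    unfolding sorted_wrt_map
    by (rule sorted_wrt_mono_rel[OF _ strict_sorted_list_of_set])
      (use fin mono in \<open>auto dest: strict_mono_onD\<close>)
  moreover have "set (map f (sorted_list_of_set A)) = f ` A" using fin by simp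
  moreover have "length (map f (sorted_list_of_set A)) = card (f ` A)"
    using card_image[OF strict_mono_on_imp_inj_on[OF mono]] by simp
  ultimately show ?thesis
    using sorted_list_of_set_unique[of "f ` A" "map f (sorted_list_of_set A)"] fin by simp
qed

lemma s_image_interval: "1 \<le> j \<Longrightarrow> j < n \<Longrightarrow> s j ` {1..n} = {1..n}"
  using permutes_image[OF s_permutes] by blast

lemma scol_in_cols:
  assumes F: "F \<in> cols n l" and j: "1 \<le> j" "j < n"
  shows "scol j F \<in> cols n l"
proof -
  have "inj_on (s j) F" by (simp add: inj_on_def s_eq_s_iff)
  then have "card (scol j F) = l" using colsD(2)[OF F] by (simp add: scol_def card_image)
  moreover have "scol j F \<subseteq> {1..n}" using colsD(1)[OF F] s_image_interval[OF j]
    by (auto simp: scol_def)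
  ultimately show ?thesis by (simp add: cols_def)
qed

lemma u_scol:
  assumes F: "F \<in> cols n l" and j: "1 \<le> j" "j < n" and one: "j \<in> F \<longleftrightarrow> Suc j \<notin> F"
  shows "u n (scol j F) = s j \<circ> u n F"
proof
  fix k
  have G: "scol j F \<in> cols n l" using scol_in_cols[OF F j] .
  have mono_col: "strict_mono_on F (s j)"
    using s_less_s_if_not_both[of j F] one by (intro strict_mono_onI) blast
  have mono_compl: "strict_mono_on ({1..n} - F) (s j)"
    using s_less_s_if_not_both[of j "{1..n} - F"] one by (intro strict_mono_onI) blast
  have L: "sorted_list_of_set (scol j F) = map (s j) (sorted_list_of_set F)"
    unfolding scol_def by (rule sorted_list_of_set_image_strict_mono[OF colsD(3)[OF F] mono_col])
  have cmp: "{1..n} - scol j F = s j ` ({1..n} - F)"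
    unfolding scol_def using s_image_interval[OF j] by (simp add: image_set_diff inj_def s_eq_s_iff)
  have M: "sorted_list_of_set ({1..n} - scol j F) = map (s j) (sorted_list_of_set ({1..n} - F))"
    unfolding cmp by (rule sorted_list_of_set_image_strict_mono[OF _ mono_compl]) simp
  show "u n (scol j F) k = (s j \<circ> u n F) k"
  proof (cases "1 \<le> k \<and> k \<le> l")
    case True
    have "k - 1 < length (sorted_list_of_set F)" using True length_sorted_list_of_set colsD(2)[OF F]
      by auto
    then show ?thesis using True u_apply_le[OF F] u_apply_le[OF G] L by simp
  next
    case False
    show ?thesis
    proof (cases "l < k \<and> k \<le> n")
      case True
      have "k - l - 1 < length (sorted_list_of_set ({1..n} - F))"
        using True length_sorted_list_of_set colsD(6)[OF F] by auto
      then show ?thesis using True u_apply_gt[OF F] u_apply_gt[OF G] M by simp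
    next
      case False2: False
      then have "k \<notin> {1..n}" using False by auto
      then show ?thesis using u_apply_out[OF F] u_apply_out[OF G] j by (auto simp: s_apply)
    qed
  qed
qed

lemma scol_eq_self:
  assumes both: "j \<in> F \<longleftrightarrow> Suc j \<in> F"
  shows "scol j F = F"
proof -
  have sub: "s j ` F \<subseteq> F" using both by (auto simp: s_apply)
  have "F = s j ` (s j ` F)" by (simp add: image_comp)
  also have "\<dots> \<subseteq> s j ` F" using sub by blast
  finally show ?thesis using sub by (simp add: scol_def)
qed

lemma inv_u_block:
  assumes F: "F \<in> cols n l" and x: "x \<in> {1..n}"
  shows "inv (u n F) x \<in> {1..n}" "inv (u n F) x \<le> l \<longleftrightarrow> x \<in> F"
proof -
  have up: "u n F permutes {1..n}" using u_permutes[OF F] .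
  show r: "inv (u n F) x \<in> {1..n}" using permutes_inv_in[OF up x] .
  have ux: "u n F (inv (u n F) x) = x" using up by (simp add: permutes_inverses(1))
  show "inv (u n F) x \<le> l \<longleftrightarrow> x \<in> F"
  proof
    assume "inv (u n F) x \<le> l"
    then show "x \<in> F" using u_in_col[OF F, of "inv (u n F) x"] r ux by simp
  next
    assume "x \<in> F"
    then show "inv (u n F) x \<le> l" using u_in_complement[OF F, of "inv (u n F) x"] r ux
      by (cases "inv (u n F) x \<le> l") auto
  qed
qed

lemma u_maps_adjacent_to_adjacent:
  assumes F: "F \<in> cols n l" and j: "1 \<le> j" "j < n" and both: "j \<in> F \<longleftrightarrow> Suc j \<in> F"
  shows "\<exists>k. 1 \<le> k \<and> k < n \<and> k \<noteq> l \<and> u n F k = j \<and> u n F (Suc k) = Suc j"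
proof -
  have up: "u n F permutes {1..n}" using u_permutes[OF F] .
  define k where "k = inv (u n F) j"
  define k' where "k' = inv (u n F) (Suc j)"
  have jr: "j \<in> {1..n}" "Suc j \<in> {1..n}" using j by auto
  have kr: "k \<in> {1..n}" "k' \<in> {1..n}" unfolding k_def k'_def using inv_u_block(1)[OF F] jr by auto
  have uk: "u n F k = j" "u n F k' = Suc j" unfolding k_def k'_def using up
    by (simp_all add: permutes_inverses(1))
  have blk: "k \<le> l \<longleftrightarrow> k' \<le> l" unfolding k_def k'_def using inv_u_block(2)[OF F] jr both by simp
  have mono: "\<And>a b. a \<in> {1..n} \<Longrightarrow> b \<in> {1..n} \<Longrightarrow> a < b \<Longrightarrow> (a \<le> l \<longleftrightarrow> b \<le> l) \<Longrightarrow> u n F a < u n F b"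
    using u_less_u_le[OF F] u_less_u_gt[OF F] by (metis atLeastAtMost_iff not_le)
  have "k \<noteq> k'" using uk by auto
  moreover have "\<not> k' < k" using mono[OF kr(2) kr(1) _ ] blk uk by auto
  ultimately have kk: "k < k'" by simp
  have sk: "Suc k = k'"
  proof (rule ccontr)
    assume "Suc k \<noteq> k'"
    then have a: "Suc k < k'" using kk by simp
    have skr: "Suc k \<in> {1..n}" using a kr by auto
    have b1: "Suc k \<le> l \<longleftrightarrow> k \<le> l" using a blk by auto
    have "u n F k < u n F (Suc k)" using mono[OF kr(1) skr _ ] b1 by auto
    moreover have "u n F (Suc k) < u n F k'" using mono[OF skr kr(2) a] b1 blk by auto
    ultimately show False using uk by simp
  qed
  have "k \<noteq> l" using blk sk kr by auto
  then show ?thesis using kr sk uk by (intro exI[of _ k]) auto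
qed

lemma not_col_le_scol:
  assumes F: "F \<in> cols n l" and j: "1 \<le> j" "j < n" and jin: "j \<in> F" and sj: "Suc j \<notin> F"
  shows "\<not> col_le (scol j F) F"
proof
  assume cl: "col_le (scol j F) F"
  have mono_col: "strict_mono_on F (s j)"
    using s_less_s_if_not_both[of j F] sj by (intro strict_mono_onI) blast
  have L: "sorted_list_of_set (scol j F) = map (s j) (sorted_list_of_set F)"
    unfolding scol_def by (rule sorted_list_of_set_image_strict_mono[OF colsD(3)[OF F] mono_col])
  note P = strict_sorted_list_of_set[of F] set_sorted_list_of_set[OF colsD(3)[OF F]] length_sorted_list_of_set
  obtain p where p: "p < length (sorted_list_of_set F)" "sorted_list_of_set F ! p = j"
    using jin P(2) by (metis in_set_conv_nth)
  have "p < card (scol j F)" using p P(3) scol_in_cols[OF F j] colsD(2)[OF F]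
    by (simp add: cols_def)
  then have "sorted_list_of_set (scol j F) ! p \<le> sorted_list_of_set F ! p" using cl
    by (simp add: col_le_def)
  then show False using L p by (simp add: s_apply)
qed


section \<open>Inverses of basis elements\<close>

lemma hmult_Tb_Ts_ascent:
  assumes x: "x permutes {1..n}" and j: "1 \<le> j" "j < n" and asc: "x j < x (Suc j)"
  shows "hmult n t (Tb n x) (Tb n (s j)) = Tb n (x \<circ> s j)"
proof -
  have sj: "Tb n (s j) = Tr_mult n t j (Tb n id)"
    using Tr_mult_Tb_ascent[OF permutes_id j, of t] by simp
  have "Tr_equivariant n t (Tw_mult n t x)" using Tw_mult_hlinear_equivariant[OF x] by blast
  then have "hmult n t (Tb n x) (Tb n (s j)) = Tr_mult n t j (Tw_mult n t x (Tb n id))"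
    unfolding hmult_Tb[OF x] sj using j by (simp add: Tr_equivariant_def)
  also have "\<dots> = Tb n (x \<circ> s j)"
    using Tw_mult_Tb_id[OF x, where t=t] Tr_mult_Tb_ascent[OF x j asc, where t=t] by simp
  finally show ?thesis .
qed

lemma hmult_Ts_Tb_ascent:
  assumes x: "x permutes {1..n}" and k: "1 \<le> k" "k < n" and asc: "inv x k < inv x (Suc k)"
  shows "hmult n t (Tb n (s k)) (Tb n x) = Tb n (s k \<circ> x)"
  using hmult_Ts[OF k, where t=t] Ti_mult_Tb_ascent[OF x k asc, where t=t] by simp

lemma hinv_in_Hn: "x permutes {1..n} \<Longrightarrow> (t::'a::comm_ring_1) dvd 1 \<Longrightarrow> hinv n t (Tb n x) \<in> Hn n"
  using hinverse_hinv by (auto simp: hinverse_def)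

lemma hinv_Tb_comp_s:
  fixes t :: "'a::comm_ring_1"
  assumes x: "x permutes {1..n}" and j: "1 \<le> j" "j < n" and asc: "x j < x (Suc j)" and tu: "t dvd 1"
  shows "hinv n t (Tb n (x \<circ> s j)) = hmult n t (hinv n t (Tb n (s j))) (hinv n t (Tb n x))"
  unfolding hmult_Tb_Ts_ascent[OF x j asc, of t, symmetric]
  by (rule hinv_eq[OF hinverse_hmult[OF hinverse_hinv[OF x tu] hinverse_hinv[OF s_permutes[OF j] tu]]])

lemma hinv_Ts_eigenvector:
  fixes t :: "'a::comm_ring_1"
  assumes j: "1 \<le> j" "j < n" and tu: "t dvd 1" and g: "g \<in> Hn n"
    and eig: "hmult n t (Tb n (s j)) g = hsmult t g"
  shows "g = hsmult t (hmult n t (hinv n t (Tb n (s j))) g)"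
proof -
  have "hmult n t (hinv n t (Tb n (s j))) (Tb n (s j)) = Tb n id"
    using hinverse_hinv[OF s_permutes[OF j] tu] by (simp add: hinverse_def)
  then have "g = hmult n t (hmult n t (hinv n t (Tb n (s j))) (Tb n (s j))) g"
    by (simp add: hmult_id_left)
  also have "\<dots> = hsmult t (hmult n t (hinv n t (Tb n (s j))) g)"
    using g eig by (simp add: hmult_assoc Tb_in_Hn hmult_hsmult_right)
  finally show ?thesis .
qed

definition twist :: "nat \<Rightarrow> 'a::comm_ring_1 \<Rightarrow> nat set \<Rightarrow> 'a hecke \<Rightarrow> 'a hecke" where
  "twist n t C g = hsmult (t ^ len n (u n C)) (hmult n t (hinv n t (Tb n (inv (u n C)))) g)"

lemma Psi_col_eq_twist: "Psi_col n t C = twist n t C (one_lam n (card C))"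
  by (simp add: Psi_col_def twist_def)

lemma Psi_Cons_Cons: "Psi n t (C # D # S) = twist n t C (decomp n t (card C) (Psi n t (D # S)) C)"
  by (simp add: twist_def)

lemma scol_descent:
  assumes F: "F \<in> cols n l" and j: "1 \<le> j" "j < n" and jF: "j \<notin> F" and sjF: "Suc j \<in> F"
  shows "inv (u n F) = inv (u n (scol j F)) \<circ> s j"
    and "inv (u n (scol j F)) j < inv (u n (scol j F)) (Suc j)"
    and "len n (u n F) = Suc (len n (u n (scol j F)))"
proof -
  let ?G = "scol j F"
  have G: "?G \<in> cols n l" using scol_in_cols[OF F j] .
  have uF: "u n F = s j \<circ> u n ?G"
    using u_scol[OF F j] jF sjF by (simp add: comp_assoc[symmetric] s_comp_s)
  have uG: "u n ?G permutes {1..n}" using u_permutes[OF G] .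
  have "j \<in> ?G" using sjF by (force simp: scol_def s_apply)
  moreover have "Suc j \<notin> ?G"
    using jF by (auto simp: scol_def s_apply split: if_splits)
  moreover have "j \<in> {1..n}" "Suc j \<in> {1..n}" using j by auto
  ultimately have "inv (u n ?G) j \<le> l" "\<not> inv (u n ?G) (Suc j) \<le> l"
    using inv_u_block(2)[OF G] by simp_all
  then show asc: "inv (u n ?G) j < inv (u n ?G) (Suc j)" by simp
  show "len n (u n F) = Suc (len n (u n ?G))"
    unfolding uF using len_s_comp_ascent[OF uG j asc] .
  show "inv (u n F) = inv (u n ?G) \<circ> s j"
    unfolding uF using s_permutes[OF j] uG by (simp add: permutes_bij o_inv_distrib inv_s)
qed

lemma twist_scol:
  fixes t :: "'a::comm_ring_1"
  assumes F: "F \<in> cols n l" and j: "1 \<le> j" "j < n" and jF: "j \<notin> F" and sjF: "Suc j \<in> F"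
    and tu: "t dvd 1" and g: "g \<in> Hn n"
  shows "twist n t F g = hsmult t (hmult n t (hinv n t (Tb n (s j))) (twist n t (scol j F) g))"
proof -
  note desc = scol_descent[OF F j jF sjF]
  let ?X = "inv (u n (scol j F))"
  have X: "?X permutes {1..n}" using u_permutes[OF scol_in_cols[OF F j]] by (rule permutes_inv)
  have "hinv n t (Tb n (inv (u n F))) = hmult n t (hinv n t (Tb n (s j))) (hinv n t (Tb n ?X))"
    unfolding desc(1) by (rule hinv_Tb_comp_s[OF X j desc(2) tu])
  then show ?thesis
    unfolding twist_def desc(3) using hinv_in_Hn[OF X tu] hinv_in_Hn[OF s_permutes[OF j] tu] g
    by (simp add: hmult_assoc hmult_hsmult_right hsmult_hsmult)
qed

lemma one_lam_in_Hn: "one_lam n l \<in> Hn n"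
  by (auto simp: one_lam_def Hn_def stab_def)

lemma s_comp_in_perms_iff:
  assumes k: "1 \<le> k" "k < n"
  shows "s k \<circ> v \<in> perms n \<longleftrightarrow> v \<in> perms n"
proof
  assume "s k \<circ> v \<in> perms n"
  then have "s k \<circ> (s k \<circ> v) \<in> perms n"
    using permutes_compose[OF _ s_permutes[OF k]] by (simp add: perms_def)
  then show "v \<in> perms n" by (simp add: comp_assoc[symmetric] s_comp_s)
qed (use permutes_compose[OF _ s_permutes[OF k]] in \<open>simp add: perms_def\<close>)

lemma s_comp_in_stab_iff:
  assumes k: "1 \<le> k" "k < n" "k \<noteq> l"
  shows "s k \<circ> v \<in> stab n l \<longleftrightarrow> v \<in> stab n l"
proof -
  have fix1: "s k ` {1..l} = {1..l}" using s_image_initial[OF k(1) k(3)] .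
  have "(s k \<circ> v) ` {1..l} = s k ` (v ` {1..l})" by (rule image_comp[symmetric])
  moreover have "v ` {1..l} = s k ` ((s k \<circ> v) ` {1..l})" by (simp add: image_comp)
  ultimately have "(s k \<circ> v) ` {1..l} = {1..l} \<longleftrightarrow> v ` {1..l} = {1..l}" using fix1 by metis
  then show ?thesis using s_comp_in_perms_iff[OF k(1,2)] by (simp add: stab_def)
qed

lemma one_lam_s_comp:
  "1 \<le> k \<Longrightarrow> k < n \<Longrightarrow> k \<noteq> l \<Longrightarrow> one_lam n l (s k \<circ> v) = one_lam n l v"
  by (simp add: one_lam_def s_comp_in_stab_iff)

lemma Ti_mult_one_lam:
  assumes k: "1 \<le> k" "k < n" "k \<noteq> l"
  shows "Ti_mult n t k (one_lam n l) = hsmult t (one_lam n l)"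
proof
  fix v
  show "Ti_mult n t k (one_lam n l) v = hsmult t (one_lam n l) v"
  proof (cases "v \<in> perms n")
    case True
    then show ?thesis using s_comp_in_stab_iff[OF k, of v]
      by (auto simp: Ti_mult_def one_lam_def hsmult_def algebra_simps)
  next
    case False
    then show ?thesis by (auto simp: Ti_mult_def one_lam_def hsmult_def stab_def)
  qed
qed

lemma hmult_Ts_hinv_Tb_conj:
  fixes t :: "'a::comm_ring_1"
  assumes x: "x permutes {1..n}" and j: "1 \<le> j" "j < n" and k: "1 \<le> k" "k < n"
    and xj: "x j = k" "x (Suc j) = Suc k" and tu: "t dvd 1"
  shows "hmult n t (Tb n (s j)) (hinv n t (Tb n x)) = hmult n t (hinv n t (Tb n x)) (Tb n (s k))"
proof -
  define Y where "Y = hinv n t (Tb n x)"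
  have Y: "Y \<in> Hn n" "hmult n t Y (Tb n x) = Tb n id" "hmult n t (Tb n x) Y = Tb n id"
    using hinverse_hinv[OF x tu] unfolding Y_def by (auto simp: hinverse_def)
  have "s k \<circ> x = x \<circ> s j" using s_comp_eq_comp_s_iff[OF x] xj by blast
  moreover have "inv x k = j" "inv x (Suc k) = Suc j" using x xj by (simp_all add: permutes_inv_eq)
  ultimately have comm: "hmult n t (Tb n x) (Tb n (s j)) = hmult n t (Tb n (s k)) (Tb n x)"
    using hmult_Tb_Ts_ascent[OF x j, of t] hmult_Ts_Tb_ascent[OF x k, of t] xj by simp
  have "hmult n t (Tb n (s j)) Y = hmult n t (hmult n t Y (Tb n x)) (hmult n t (Tb n (s j)) Y)"
    using Y by (simp add: hmult_id_left)
  also have "\<dots> = hmult n t Y (hmult n t (hmult n t (Tb n x) (Tb n (s j))) Y)"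
    using Y(1) by (simp add: hmult_assoc Tb_in_Hn hmult_in_Hn)
  also have "\<dots> = hmult n t Y (hmult n t (Tb n (s k)) (hmult n t (Tb n x) Y))"
    unfolding comm using Y by (simp add: hmult_assoc Tb_in_Hn)
  also have "\<dots> = hmult n t Y (Tb n (s k))"
    using Y hmult_Tb_id[OF Tb_in_Hn, where t=t] by simp
  finally show ?thesis unfolding Y_def .
qed

text \<open>If \<open>s\<^sub>jE = E\<close>, the positions \<open>k, k+1\<close> of \<open>j, j+1\<close> in \<open>u\<^sub>E\<close> lie in the same block, so
  \<open>T\<^sub>j\<close> passes through \<open>(T\<^bsub>u\<^sub>E\<^sup>-\<^sup>1\<^esub>)\<^sup>-\<^sup>1\<close> as \<open>T\<^sub>k\<close>, which acts on \<open>\<one>\<^bsub>\<varpi>\<^sub>l\<^esub>\<close> by \<open>t\<close>.\<close>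

lemma Psi_col_eq_when_scol_fixed:
  fixes t :: "'a::comm_ring_1"
  assumes F: "F \<in> cols n l" and j: "1 \<le> j" "j < n" and both: "j \<in> F \<longleftrightarrow> Suc j \<in> F"
    and tu: "t dvd 1"
  shows "Psi_col n t F = hsmult t (hmult n t (hinv n t (Tb n (s j))) (Psi_col n t F))"
proof (rule hinv_Ts_eigenvector[OF j tu])
  obtain k where k: "1 \<le> k" "k < n" "k \<noteq> l" "u n F k = j" "u n F (Suc k) = Suc j"
    using u_maps_adjacent_to_adjacent[OF F j both] by blast
  let ?X = "inv (u n F)"
  let ?Y = "hinv n t (Tb n ?X)"
  have up: "u n F permutes {1..n}" using u_permutes[OF F] .
  have X: "?X permutes {1..n}" using permutes_inv[OF up] .
  have Y: "?Y \<in> Hn n" using hinv_in_Hn[OF X tu] .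
  have Xj: "?X j = k" "?X (Suc j) = Suc k" using up k by (simp_all add: permutes_inv_eq)
  have P: "Psi_col n t F = hsmult (t ^ len n (u n F)) (hmult n t ?Y (one_lam n l))"
    using colsD(2)[OF F] by (simp add: Psi_col_eq_twist twist_def)
  show "Psi_col n t F \<in> Hn n"
    unfolding P by (intro Hn_smult hmult_in_Hn one_lam_in_Hn)
  have "hmult n t (Tb n (s j)) (hmult n t ?Y (one_lam n l))
      = hmult n t ?Y (hmult n t (Tb n (s k)) (one_lam n l))"
    using hmult_Ts_hinv_Tb_conj[OF X j k(1,2) Xj tu] Y
    by (simp add: hmult_assoc[symmetric] Tb_in_Hn one_lam_in_Hn)
  also have "\<dots> = hsmult t (hmult n t ?Y (one_lam n l))"
    using hmult_Ts[OF k(1,2), of t] Ti_mult_one_lam[OF k(1,2,3), of t]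
      by (simp add: hmult_hsmult_right)
  finally show "hmult n t (Tb n (s j)) (Psi_col n t F) = hsmult t (Psi_col n t F)"
    unfolding P by (simp add: hmult_hsmult_right hsmult_hsmult mult.commute)
qed


lemma nth_sorted_list_of_set_initial: "Suc 0 \<le> k \<Longrightarrow> k \<le> m \<Longrightarrow> sorted_list_of_set {Suc 0..m} ! (k - Suc 0) = (k::nat)"
proof -
  assume k: "Suc 0 \<le> k" "k \<le> m"
  have "{Suc 0..m} = {Suc 0..<Suc m}" by auto
  then have "sorted_list_of_set {Suc 0..m} = [Suc 0..<Suc m]"
    by (simp only: sorted_list_of_set_range)
  then show ?thesis using k by (simp del: upt_Suc add: nth_upt)
qed

lemma u_initial_eq_id:
  assumes m: "m \<le> n"
  shows "u n {1..m} = id"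
proof
  fix k
  have c: "card {1..m} = m" by simp
  have d: "{1..n} - {1..m} = {Suc m..<Suc n}" by auto
  show "u n {1..m} k = id k"
  proof (cases "1 \<le> k \<and> k \<le> m")
    case True then show ?thesis by (simp add: u_def nth_sorted_list_of_set_initial)
  next
    case False
    show ?thesis
    proof (cases "m < k \<and> k \<le> n")
      case True
      have "sorted_list_of_set ({1..n} - {1..m}) ! (k - m - 1) = k"
        unfolding d sorted_list_of_set_range using True by (simp del: upt_Suc add: nth_upt)
      then show ?thesis using True by (simp add: u_def)
    next
      case False2: False
      then show ?thesis using False by (auto simp: u_def)
    qed
  qed
qed

lemma initial_in_cols: "m \<le> n \<Longrightarrow> {1..m} \<in> cols n m"
  by (auto simp: cols_def)

lemma Psi_col_initial:
  fixes t :: "'a::comm_ring_1"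
  assumes m: "m \<le> n"
  shows "Psi_col n t {1..m} = one_lam n m"
  unfolding Psi_col_def u_initial_eq_id[OF m] by (simp add: len_id hinv_id hmult_id_left)

lemma Psi_Cons_initial:
  fixes t :: "'a::comm_ring_1"
  assumes m: "m \<le> n" and h: "Psi n t (D # S) \<in> Hn n"
  shows "Psi n t ({1..m} # D # S) = (\<lambda>w. if w \<in> stab n m then Psi n t (D # S) w else 0)"
proof -
  have "Psi n t ({1..m} # D # S) = coset_coeff n m (Psi n t (D # S)) {1..m}"
    unfolding Psi_Cons_Cons twist_def u_initial_eq_id[OF m]
    by (simp add: len_id hinv_id hmult_id_left decomp_eq_coset_coeff[OF h m])
  also have "\<dots> = (\<lambda>w. if w \<in> stab n m then Psi n t (D # S) w else 0)"
    unfolding coset_coeff_def u_initial_eq_id[OF m] using initial_in_cols[OF m]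
      by (simp cong: if_cong)
  finally show ?thesis .
qed

text \<open>A tableau whose columns are initial segments has \<open>\<Psi>\<close> invariant under \<open>w \<mapsto> s\<^sub>jw\<close> for
  every \<open>j\<close> beyond its first column: each factor \<open>\<one>\<^bsub>\<varpi>\<^sub>m\<^esub>\<close> is.\<close>

lemma Psi_initial_columns:
  fixes t :: "'a::comm_ring_1"
  assumes "Cs \<noteq> []" "\<forall>C\<in>set Cs. \<exists>m\<le>n. C = {1..m}"
    "\<forall>k. Suc k < length Cs \<longrightarrow> card (Cs ! Suc k) \<le> card (Cs ! k)"
  shows "Psi n t Cs \<in> Hn n \<and>
    (\<forall>j v. card (hd Cs) < j \<longrightarrow> j < n \<longrightarrow> Psi n t Cs (s j \<circ> v) = Psi n t Cs v)"
  using assms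
proof (induction Cs rule: induct_list012)
  case 1
  then show ?case by simp
next
  case (2 C)
  obtain m where m: "m \<le> n" "C = {1..m}" using "2.prems"(2) by auto
  then have P: "Psi n t [C] = one_lam n m" using Psi_col_initial[OF m(1), of t] by simp
  show ?case
  proof (intro conjI allI impI)
    show "Psi n t [C] \<in> Hn n" unfolding P by (rule one_lam_in_Hn)
    fix j v assume "card (hd [C]) < j" "j < n"
    then show "Psi n t [C] (s j \<circ> v) = Psi n t [C] v"
      unfolding P using m by (intro one_lam_s_comp) auto
  qed
next
  case (3 C D S)
  obtain m where m: "m \<le> n" "C = {1..m}" using "3.prems"(2) by auto
  have tail_init: "\<forall>C\<in>set (D # S). \<exists>m\<le>n. C = {1..m}" using "3.prems"(2) by simp
  have tail_card: "\<forall>k. Suc k < length (D # S) \<longrightarrow> card ((D # S) ! Suc k) \<le> card ((D # S) ! k)"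
    using "3.prems"(3) by (metis length_Cons nth_Cons_Suc Suc_less_eq)
  have "Psi n t (D # S) \<in> Hn n \<and> (\<forall>j v. card (hd (D # S)) < j \<longrightarrow> j < n \<longrightarrow>
      Psi n t (D # S) (s j \<circ> v) = Psi n t (D # S) v)"
    by (rule "3.IH"(2)[OF _ tail_init tail_card]) simp
  then have IH: "Psi n t (D # S) \<in> Hn n"
    "\<And>j v. card D < j \<Longrightarrow> j < n \<Longrightarrow> Psi n t (D # S) (s j \<circ> v) = Psi n t (D # S) v"
    unfolding list.sel(1) by blast+
  have DC: "card D \<le> m" using "3.prems"(3)[rule_format, of 0] m by simp
  have P: "Psi n t (C # D # S) = (\<lambda>w. if w \<in> stab n m then Psi n t (D # S) w else 0)"
    using Psi_Cons_initial[OF m(1) IH(1)] m(2) by simp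
  show ?case
  proof (intro conjI allI impI)
    show "Psi n t (C # D # S) \<in> Hn n" unfolding P using IH(1) by (auto simp: Hn_def stab_def)
    fix j v assume j: "card (hd (C # D # S)) < j" "j < n"
    then have "m < j" using m by simp
    then show "Psi n t (C # D # S) (s j \<circ> v) = Psi n t (C # D # S) v"
      unfolding P using IH(2)[of j v] s_comp_in_stab_iff[of j n m v] DC j(2) by (simp cong: if_cong)
  qed
qed

lemma down_closed_eq_initial:
  fixes A :: "nat set"
  assumes sub: "A \<subseteq> {1..n}" and dc: "\<And>i i'. i \<in> A \<Longrightarrow> 1 \<le> i' \<Longrightarrow> i' \<le> i \<Longrightarrow> i' \<in> A"
  shows "\<exists>m\<le>n. A = {1..m}"
proof (cases "A = {}")
  case True
  then show ?thesis by (intro exI[of _ 0]) auto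
next
  case False
  have fin: "finite A" using sub finite_subset by blast
  have MA: "Max A \<in> A" using Max_in[OF fin False] .
  have "A = {1..Max A}"
  proof
    show "A \<subseteq> {1..Max A}" using sub Max_ge[OF fin] by auto
    show "{1..Max A} \<subseteq> A" using dc[OF MA] by auto
  qed
  moreover have "Max A \<le> n" using MA sub by auto
  ultimately show ?thesis by blast
qed

lemma T0_columns_initial:
  assumes part: "is_partition n lam"
  shows "\<forall>C\<in>set (T0 n lam). \<exists>m\<le>n. C = {1..m}"
proof
  fix C assume "C \<in> set (T0 n lam)"
  then obtain k where C: "C = {i \<in> {1..n}. k \<le> lam ! (i - 1)}"
    by (auto simp: T0_def)
  have len: "length lam = n" and sr: "sorted (rev lam)" using part by (auto simp: is_partition_def)
  show "\<exists>m\<le>n. C = {1..m}"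
  proof (rule down_closed_eq_initial)
    show "C \<subseteq> {1..n}" using C by auto
    fix i i' assume i: "i \<in> C" "1 \<le> i'" "i' \<le> i"
    have "lam ! (i - 1) \<le> lam ! (i' - 1)"
      using sorted_rev_nth_mono[OF sr, of "i' - 1" "i - 1"] i C len by auto
    then show "i' \<in> C" using i C by auto
  qed
qed

lemma semistandard_tail_card_antimono:
  assumes ss: "semistandard (E # Ts)"
  shows "\<forall>k. Suc k < length Ts \<longrightarrow> card (Ts ! Suc k) \<le> card (Ts ! k)"
proof (intro allI impI)
  fix k assume "Suc k < length Ts"
  then have "Suc (Suc k) < length (E # Ts)" by simp
  then have "card ((E # Ts) ! Suc (Suc k)) \<le> card ((E # Ts) ! Suc k)"
    using ss unfolding semistandard_def by blast
  then show "card (Ts ! Suc k) \<le> card (Ts ! k)" by simp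
qed

lemma strict_sorted_nth_ge:
  assumes s: "sorted_wrt (<) xs" and pos: "\<forall>x\<in>set xs. 1 \<le> x"
  shows "i < length xs \<Longrightarrow> Suc i \<le> (xs ! i :: nat)"
proof (induction i)
  case 0
  then show ?case using pos by (simp add: Suc_le_eq)
next
  case (Suc i)
  then have "xs ! i < xs ! Suc i" using sorted_wrt_nth_less[OF s, of i "Suc i"] by simp
  then show ?case using Suc by simp
qed

text \<open>If \<open>j \<le> m\<close>, row \<open>j\<close> of \<open>{1..m}\<close> holds \<open>j\<close>, and the \<open>j\<close>-th entry of \<open>E\<close> is squeezed
  between \<open>j\<close> and that entry, so \<open>j \<in> E\<close>.\<close>

lemma semistandard_Cons_initial_lt:
  assumes E: "E \<in> cols n l" and ss: "semistandard (E # {1..m} # S)" and j: "1 \<le> j" "j \<notin> E"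
  shows "m < j"
proof (rule ccontr)
  assume "\<not> m < j"
  then have jm: "j - 1 < m" using j by simp
  have "Suc 0 < length (E # {1..m} # S)" by simp
  then have "card {1..m} \<le> card E \<and>
      (\<forall>r < card {1..m}. sorted_list_of_set E ! r \<le> sorted_list_of_set {1..m} ! r)"
    using ss unfolding semistandard_def by fastforce
  then have cE: "j - 1 < card E" and le: "sorted_list_of_set E ! (j - 1) \<le> j"
    using jm j nth_sorted_list_of_set_initial[of j m] by auto
  have "\<forall>x\<in>set (sorted_list_of_set E). 1 \<le> x" using colsD(1,3)[OF E] by auto
  then have "j \<le> sorted_list_of_set E ! (j - 1)"
    using strict_sorted_nth_ge[OF strict_sorted_list_of_set, of E "j - 1"] cE j by simp
  then have "sorted_list_of_set E ! (j - 1) = j" using le by simp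
  moreover have "sorted_list_of_set E ! (j - 1) \<in> E"
    using nth_mem[of "j - 1" "sorted_list_of_set E"] cE colsD(3)[OF E] by simp
  ultimately show False using j by simp
qed

lemma decomp_scol_eq:
  fixes t :: "'a::comm_ring_1"
  assumes h: "h \<in> Hn n" and inv: "\<And>v. h (s j \<circ> v) = h v" and E: "E \<in> cols n l"
    and j: "1 \<le> j" "j < n" and one: "j \<in> E \<longleftrightarrow> Suc j \<notin> E"
  shows "decomp n t l h (scol j E) = decomp n t l h E"
  using u_scol[OF E j one] scol_in_cols[OF E j] E inv
  by (simp add: decomp_eq_coset_coeff[OF h colsD(4)[OF E]] coset_coeff_def comp_assoc cong: if_cong)

section \<open>The exchange formulas\<close>

lemma Psi_col_scol:
  fixes t :: "'a::comm_ring_1"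
  assumes E: "E \<in> cols n l" and j: "1 \<le> j" "j < n" and jE: "j \<notin> E" and sjE: "Suc j \<in> E"
    and tu: "t dvd 1"
  shows "Psi_col n t E = hsmult t (hmult n t (hinv n t (Tb n (s j))) (Psi_col n t (scol j E)))"
  using twist_scol[OF E j jE sjE tu one_lam_in_Hn] colsD(2)[OF E] colsD(2)[OF scol_in_cols[OF E j]]
  by (simp add: Psi_col_eq_twist)

lemma Psi_T0_scol:
  fixes t :: "'a::comm_ring_1"
  assumes part: "is_partition n lam" and E: "E \<in> cols n l" and ss: "semistandard (E # T0 n lam)"
    and j: "1 \<le> j" "j < n" and jE: "j \<notin> E" and sjE: "Suc j \<in> E" and tu: "t dvd 1"
  shows "Psi n t (E # T0 n lam)
    = hsmult t (hmult n t (hinv n t (Tb n (s j))) (Psi n t (scol j E # T0 n lam)))"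
proof (cases "T0 n lam")
  case Nil
  then show ?thesis using Psi_col_scol[OF E j jE sjE tu] by simp
next
  case (Cons D S)
  let ?Q = "Psi n t (T0 n lam)"
  obtain m where m: "m \<le> n" "D = {1..m}" using T0_columns_initial[OF part] Cons by auto
  have "m < j" using semistandard_Cons_initial_lt[OF E _ j(1) jE] ss Cons m by simp
  moreover have "?Q \<in> Hn n \<and> (\<forall>j v. card D < j \<longrightarrow> j < n \<longrightarrow> ?Q (s j \<circ> v) = ?Q v)"
    using Psi_initial_columns[of "T0 n lam" n t] T0_columns_initial[OF part]
      semistandard_tail_card_antimono[OF ss] Cons by simp
  ultimately have Q: "?Q \<in> Hn n" "\<And>v. ?Q (s j \<circ> v) = ?Q v" using m j by auto
  have dec: "decomp n t l ?Q (scol j E) = decomp n t l ?Q E"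
    using decomp_scol_eq[OF Q E j] jE sjE by simp
  have "decomp n t l ?Q E \<in> Hn n"
    unfolding decomp_eq_coset_coeff[OF Q(1) colsD(4)[OF E]]
      by (rule Hsub_imp_Hn[OF coset_coeff_in_Hsub])
  then show ?thesis
    unfolding Cons[symmetric] Psi_Cons_Cons[of n t E D S, unfolded Cons[symmetric]]
      Psi_Cons_Cons[of n t "scol j E" D S, unfolded Cons[symmetric]]
      colsD(2)[OF E] colsD(2)[OF scol_in_cols[OF E j]] dec
    by (rule twist_scol[OF E j jE sjE tu])
qed

lemma Psi_col_exchange:
  fixes t :: "'a::comm_ring_1"
  assumes E: "E \<in> cols n l" and j: "1 \<le> j" "j < n" and le: "col_le (scol j E) E"
    and tu: "t dvd 1"
  shows "Psi_col n t E = hsmult t (hmult n t (hinv n t (Tb n (s j))) (Psi_col n t (scol j E)))"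
proof (cases "j \<in> E \<longleftrightarrow> Suc j \<in> E")
  case True
  then show ?thesis using Psi_col_eq_when_scol_fixed[OF E j True tu] scol_eq_self[OF True] by simp
next
  case False
  moreover have "\<not> (j \<in> E \<and> Suc j \<notin> E)" using not_col_le_scol[OF E j] le by blast
  ultimately show ?thesis using Psi_col_scol[OF E j _ _ tu] by blast
qed

theorem proposition6p3:
  fixes n :: nat and t :: "'a::comm_ring_1"
  assumes "n \<ge> 1" and "t dvd 1"
  shows
    "(\<forall>lam l E j. is_partition n lam \<and> l \<in> {1..n} \<and> l \<ge> nparts lam \<and> E \<in> cols n l
        \<and> semistandard (E # T0 n lam) \<and> 1 \<le> j \<and> j < n \<and> j \<notin> E \<and> Suc j \<in> E
        \<longrightarrow> Psi n t (E # T0 n lam)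
            = hsmult t (hmult n t (hinv n t (Tb n (s j))) (Psi n t (scol j E # T0 n lam))))
   \<and> (\<forall>l E j. l \<in> {1..n} \<and> E \<in> cols n l \<and> 1 \<le> j \<and> j < n \<and> col_le (scol j E) E
        \<longrightarrow> Psi_col n t E = hsmult t (hmult n t (hinv n t (Tb n (s j))) (Psi_col n t (scol j E))))"
proof (intro conjI allI impI)
  fix lam l E j
  assume "is_partition n lam \<and> l \<in> {1..n} \<and> l \<ge> nparts lam \<and> E \<in> cols n l
    \<and> semistandard (E # T0 n lam) \<and> 1 \<le> j \<and> j < n \<and> j \<notin> E \<and> Suc j \<in> E"
  then show "Psi n t (E # T0 n lam)
      = hsmult t (hmult n t (hinv n t (Tb n (s j))) (Psi n t (scol j E # T0 n lam)))"
    by (intro Psi_T0_scol[where l = l]) (use assms(2) in auto)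
next
  fix l E j
  assume "l \<in> {1..n} \<and> E \<in> cols n l \<and> 1 \<le> j \<and> j < n \<and> col_le (scol j E) E"
  then show "Psi_col n t E = hsmult t (hmult n t (hinv n t (Tb n (s j))) (Psi_col n t (scol j E)))"
    by (intro Psi_col_exchange[where l = l]) (use assms(2) in auto)
qed

end
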